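(* Let $\{(Y_{1\,t},Y_{2\,t})\}$ follow the MixTSQL model described in the context with true parameter $\boldsymbol\theta_0=(\boldsymbol\theta^{(1)}_0,\boldsymbol\theta^{(2)}_0)^\top$, and let $\widehat{\boldsymbol\theta}$ be the quasi-maximum likelihood estimator based on observations $t=1,\ldots,n$. Assume: (A2) $\{(Y_{1\,t},Y_{2\,t})\}$ is stationary and ergodic; (B1) $\boldsymbol\theta_0$ is an interior point of $\Theta=\Theta_1\times\Theta_2$, a compact subset of $\mathbb R^{r+s+1}\times\mathbb R^{p+k+1}$; (C1) $E\big[\sup_{\boldsymbol\theta\in\Theta}|Q_{1\,t}(\boldsymbol\theta^{(1)})+Q_{2\,t}(\boldsymbol\theta^{(2)})|\big]<\infty$; (C2) $E\big[-Q_{1\,t}(\boldsymbol\theta^{(1)})-Q_{2\,t}(\boldsymbol\theta^{(2)})\big]$, as a function of $\boldsymbol\theta\in\Theta$, has a unique minimum at $\boldsymbol\theta_0$. Then $\widehat{\boldsymbol\theta}\to\boldsymbol\theta_0$ in probability as $n\to\infty$.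
   Context: MixTSQL model: with $\mathcal F^{(1,2)}_{t-1}=\sigma(Y_{1\,t-1},Y_{2\,t-1},Y_{1\,t-2},Y_{2\,t-2},\ldots)$, $Y_{1\,t}$ and $Y_{2\,t}$ are conditionally independent given $\mathcal F^{(1,2)}_{t-1}$, and conditionally on $\mathcal F^{(1,2)}_{t-1}$, $Y_{j\,t}$ has mean $\mu_{j\,t}$ and variance $\phi_jV_j(\mu_{j\,t})$ ($\phi_j>0$, $V_j$ a variance function), $j=1,2$, where $g_1(\mu_{1\,t})=\nu_{1\,t}(\boldsymbol\theta^{(1)})=\beta^{(1)}_0+\sum_{i=1}^r\beta^{(1)}_i\widetilde Y_{1\,t-i}+\sum_{l=1}^s\gamma^{(1)}_l\widetilde Y_{2\,t-l}$ and $g_2(\mu_{2\,t})=\nu_{2\,t}(\boldsymbol\theta^{(2)})=\beta^{(2)}_0+\sum_{i=1}^p\beta^{(2)}_i\widetilde Y_{2\,t-i}+\sum_{l=1}^k\gamma^{(2)}_l\widetilde Y_{1\,t-l}$; here $g_1,g_2$ are continuous, invertible, twice differentiable link functions, $\widetilde Y_{j\,t}=T_j(Y_{j\,t})$ for given transformations $T_j$, $\boldsymbol\theta^{(1)}=(\beta^{(1)}_0,\ldots,\beta^{(1)}_r,\gamma^{(1)}_1,\ldots,\gamma^{(1)}_s)^\top$, $\boldsymbol\theta^{(2)}=(\beta^{(2)}_0,\ldots,\beta^{(2)}_p,\gamma^{(2)}_1,\ldots,\gamma^{(2)}_k)^\top$, $\boldsymbol\theta=(\boldsymbol\theta^{(1)},\boldsymbol\theta^{(2)})^\top$.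 Quasi-log-likelihood: $Q_j(y;\mu)=\frac{1}{\phi_j}\int_y^\mu\frac{y-\omega}{V_j(\omega)}d\omega$, and $Q_{j\,t}(\boldsymbol\theta^{(j)})=Q_j(Y_{j\,t};\mu_{j\,t})$ with $\mu_{j\,t}=g_j^{-1}(\nu_{j\,t}(\boldsymbol\theta^{(j)}))$. With $m=\max(p,k,r,s)$, $\widetilde Q(\boldsymbol\theta)=\sum_{t=m+1}^n\{Q_{1\,t}(\boldsymbol\theta^{(1)})+Q_{2\,t}(\boldsymbol\theta^{(2)})\}$, and the QMLE is $\widehat{\boldsymbol\theta}=\arg\min_{\boldsymbol\theta\in\Theta}\{-\widetilde Q(\boldsymbol\theta)\}$ (conditional on the first $m$ observations). *)

theory Defs
  imports "HOL-Probability.Probability"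
begin

(* Parameter vectors in R^d are represented as functions nat => real that vanish
   from index d on; the product topology of nat => real restricted to this
   subspace is the Euclidean topology of R^d. *)
definition coord_space :: "nat \<Rightarrow> (nat \<Rightarrow> real) set" where
  "coord_space d = {x. \<forall>i\<ge>d. x i = 0}"

definition coord_dist :: "nat \<Rightarrow> (nat \<Rightarrow> real) \<Rightarrow> (nat \<Rightarrow> real) \<Rightarrow> real" where
  "coord_dist d x y = sqrt (\<Sum>i<d. (x i - y i)^2)"

definition lin_pred :: "nat \<Rightarrow> nat \<Rightarrow> (real \<Rightarrow> real) \<Rightarrow> (real \<Rightarrow> real) \<Rightarrow>
    (int \<Rightarrow> 'a \<Rightarrow> real) \<Rightarrow> (int \<Rightarrow> 'a \<Rightarrow> real) \<Rightarrow> (nat \<Rightarrow> real) \<Rightarrow> int \<Rightarrow> 'a \<Rightarrow> real" where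
  "lin_pred a b Ta Tb Ya Yb th t w =
     th 0 + (\<Sum>i=1..a. th i * Ta (Ya (t - int i) w))
          + (\<Sum>l=1..b. th (a + l) * Tb (Yb (t - int l) w))"

definition mix_mean :: "(real \<Rightarrow> real) \<Rightarrow> real set \<Rightarrow> nat \<Rightarrow> nat \<Rightarrow> (real \<Rightarrow> real) \<Rightarrow> (real \<Rightarrow> real) \<Rightarrow>
    (int \<Rightarrow> 'a \<Rightarrow> real) \<Rightarrow> (int \<Rightarrow> 'a \<Rightarrow> real) \<Rightarrow> (nat \<Rightarrow> real) \<Rightarrow> int \<Rightarrow> 'a \<Rightarrow> real" where
  "mix_mean g D a b Ta Tb Ya Yb th t w = inv_into D g (lin_pred a b Ta Tb Ya Yb th t w)"

definition quasi_loglik :: "real \<Rightarrow> (real \<Rightarrow> real) \<Rightarrow> real \<Rightarrow> real \<Rightarrow> real" where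
  "quasi_loglik phi V y mu =
     (1 / phi) * interval_lebesgue_integral lborel (ereal y) (ereal mu) (\<lambda>w. (y - w) / V w)"

(* F_{t-1} = sigma(Ya s, Yb s : s < t) *)
definition past_sigma :: "'a measure \<Rightarrow> (int \<Rightarrow> 'a \<Rightarrow> real) \<Rightarrow> (int \<Rightarrow> 'a \<Rightarrow> real) \<Rightarrow> int \<Rightarrow> 'a measure" where
  "past_sigma M Ya Yb t = sigma (space M)
     ({Ya s -` B \<inter> space M | s B. s < t \<and> B \<in> sets borel} \<union>
      {Yb s -` B \<inter> space M | s B. s < t \<and> B \<in> sets borel})"

definition cond_indep :: "'a measure \<Rightarrow> 'a measure \<Rightarrow> ('a \<Rightarrow> real) \<Rightarrow> ('a \<Rightarrow> real) \<Rightarrow> bool" where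
  "cond_indep M F X Z \<longleftrightarrow>
     (\<forall>A\<in>sets borel. \<forall>B\<in>sets borel. AE w in M.
        real_cond_exp M F (\<lambda>v. indicator A (X v) * indicator B (Z v)) w =
        real_cond_exp M F (\<lambda>v. indicator A (X v)) w * real_cond_exp M F (\<lambda>v. indicator B (Z v)) w)"

definition joint_path :: "(int \<Rightarrow> 'a \<Rightarrow> real) \<Rightarrow> (int \<Rightarrow> 'a \<Rightarrow> real) \<Rightarrow> 'a \<Rightarrow> int \<Rightarrow> real \<times> real" where
  "joint_path Ya Yb w = (\<lambda>t. (Ya t w, Yb t w))"

definition path_space :: "(int \<Rightarrow> real \<times> real) measure" where
  "path_space = PiM UNIV (\<lambda>_. borel)"

definition time_shift :: "(int \<Rightarrow> 'b) \<Rightarrow> int \<Rightarrow> 'b" where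
  "time_shift x = (\<lambda>t. x (t + 1))"

definition path_law :: "'a measure \<Rightarrow> (int \<Rightarrow> 'a \<Rightarrow> real) \<Rightarrow> (int \<Rightarrow> 'a \<Rightarrow> real) \<Rightarrow> (int \<Rightarrow> real \<times> real) measure" where
  "path_law M Ya Yb = distr M path_space (joint_path Ya Yb)"

definition stationary_proc :: "'a measure \<Rightarrow> (int \<Rightarrow> 'a \<Rightarrow> real) \<Rightarrow> (int \<Rightarrow> 'a \<Rightarrow> real) \<Rightarrow> bool" where
  "stationary_proc M Ya Yb \<longleftrightarrow> distr (path_law M Ya Yb) path_space time_shift = path_law M Ya Yb"

definition ergodic_proc :: "'a measure \<Rightarrow> (int \<Rightarrow> 'a \<Rightarrow> real) \<Rightarrow> (int \<Rightarrow> 'a \<Rightarrow> real) \<Rightarrow> bool" where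
  "ergodic_proc M Ya Yb \<longleftrightarrow>
     (\<forall>A\<in>sets path_space. time_shift -` A \<inter> space path_space = A \<longrightarrow>
        measure (path_law M Ya Yb) A = 0 \<or> measure (path_law M Ya Yb) A = 1)"

end

(* The QMLE minimises a sum over t of the contrast -Q_1t - Q_2t, and this contrast is one fixed
   function of the path of the process shifted by t.  Stationarity and ergodicity make the time shift
   an ergodic measure preserving map of path space, so Birkhoff's ergodic theorem (a consequence of
   the maximal ergodic lemma) turns time averages of integrable functions of the path into
   expectations.  Consistency then follows by Wald's argument: by continuity in the parameter and
   the domination (C1), the infimum of the contrast over a small ball around any parameter other
   than theta0 still has mean above the minimal mean of (C2); finitely many such balls cover the
   compact set of parameters away from theta0, and whenever the estimator lies in one of them some
   of finitely many ergodic averages deviates from its mean.  Measurability and continuity of the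
   quasi-log-likelihood must be checked by hand, as the variance function is only controlled on the
   domain of the mean. *)

theory Submission
  imports Defs
begin

section \<open>Birkhoff's ergodic theorem\<close>

lemma eventually_average_less:
  fixes S :: "nat \<Rightarrow> real"
  assumes bounds: "\<forall>j::nat. \<exists>C. \<forall>n. S n \<le> C + real n * (c + 1 / Suc j)" and "c < a"
  shows "\<forall>\<^sub>F n in sequentially. S n / real n < a"
proof -
  define e where "e = (a - c) / 2"
  have e: "0 < e" "a = c + 2 * e"
    using \<open>c < a\<close> by (simp_all add: e_def field_simps)
  obtain j :: nat where j: "1 / Suc j < e"
    using nat_approx_posE[OF e(1)] by auto
  obtain C where C: "\<And>n. S n \<le> C + real n * (c + 1 / Suc j)"
    using bounds by blast
  have "(\<lambda>n. C / real n) \<longlonglongrightarrow> 0"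
    by (rule lim_const_over_n)
  then have "\<forall>\<^sub>F n in sequentially. C / real n < e"
    using e(1) by (rule order_tendstoD(2))
  then show ?thesis
    using eventually_gt_at_top[of 0]
  proof eventually_elim
    case (elim n)
    then have "S n / real n \<le> (C + real n * (c + 1 / Suc j)) / real n"
      using C[of n] by (simp add: divide_right_mono)
    also have "\<dots> = C / real n + (c + 1 / Suc j)"
      using elim by (simp add: add_divide_distrib)
    finally show ?case
      using elim j e(2) by linarith
  qed
qed

locale mpt = prob_space P for P :: "'a measure" +
  fixes T :: "'a \<Rightarrow> 'a"
  assumes measurable_T: "T \<in> measurable P P"
    and distr_T: "distr P P T = P"
begin

lemma measurable_funpow_T: "T ^^ k \<in> measurable P P"
  by (induction k) (auto intro: measurable_compose[OF _ measurable_T])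

lemma distr_funpow_T: "distr P P (T ^^ k) = P"
proof (induction k)
  case (Suc k)
  have "distr P P (T ^^ Suc k) = distr (distr P P (T ^^ k)) P T"
    by (simp add: distr_distr[OF measurable_T measurable_funpow_T])
  also have "\<dots> = P"
    using Suc distr_T by simp
  finally show ?case .
qed (simp add: distr_id2)

lemma integrable_comp_funpow_T:
  fixes g :: "'a \<Rightarrow> real"
  assumes "integrable P g"
  shows "integrable P (\<lambda>x. g ((T ^^ k) x))"
  using assms integrable_distr_eq[OF measurable_funpow_T, of g] distr_funpow_T by auto

lemma integral_comp_funpow_T:
  fixes g :: "'a \<Rightarrow> real"
  assumes "g \<in> borel_measurable P"
  shows "(\<integral>x. g ((T ^^ k) x) \<partial>P) = (\<integral>x. g x \<partial>P)"
  using integral_distr[OF measurable_funpow_T assms, of k] distr_funpow_T by simp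

definition birkhoff_sum :: "('a \<Rightarrow> real) \<Rightarrow> nat \<Rightarrow> 'a \<Rightarrow> real" where
  "birkhoff_sum g n x = (\<Sum>i<n. g ((T ^^ i) x))"

lemma birkhoff_sum_0 [simp]: "birkhoff_sum g 0 x = 0"
  by (simp add: birkhoff_sum_def)

lemma birkhoff_sum_Suc: "birkhoff_sum g (Suc n) x = g x + birkhoff_sum g n (T x)"
  unfolding birkhoff_sum_def
  by (subst sum.lessThan_Suc_shift) (simp add: funpow_Suc_right del: funpow.simps)

lemma birkhoff_sum_uminus: "birkhoff_sum (\<lambda>x. - g x) n x = - birkhoff_sum g n x"
  by (simp add: birkhoff_sum_def sum_negf)

lemma birkhoff_sum_diff_const: "birkhoff_sum (\<lambda>x. g x - b) n x = birkhoff_sum g n x - real n * b"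
  by (simp add: birkhoff_sum_def sum_subtractf)

lemma borel_measurable_birkhoff_sum [measurable]:
  assumes [measurable]: "g \<in> borel_measurable P"
  shows "birkhoff_sum g n \<in> borel_measurable P"
  unfolding birkhoff_sum_def using measurable_funpow_T by measurable

lemma integrable_birkhoff_sum: "integrable P g \<Longrightarrow> integrable P (birkhoff_sum g n)"
  unfolding birkhoff_sum_def by (intro Bochner_Integration.integrable_sum integrable_comp_funpow_T)

fun birkhoff_max :: "('a \<Rightarrow> real) \<Rightarrow> nat \<Rightarrow> 'a \<Rightarrow> real" where
  "birkhoff_max g 0 x = 0"
| "birkhoff_max g (Suc n) x = max (birkhoff_max g n x) (birkhoff_sum g (Suc n) x)"

lemma birkhoff_max_nonneg: "0 \<le> birkhoff_max g n x"
  by (induction n) auto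

lemma birkhoff_sum_le_max: "k \<le> n \<Longrightarrow> birkhoff_sum g k x \<le> birkhoff_max g n x"
  by (induction n) (auto simp: le_Suc_eq)

lemma birkhoff_max_cases:
  "birkhoff_max g n x = 0 \<or> (\<exists>k\<in>{1..n}. birkhoff_max g n x = birkhoff_sum g k x)"
  by (induction n) (auto simp: max_def)

lemma integrable_birkhoff_max: "integrable P g \<Longrightarrow> integrable P (birkhoff_max g n)"
proof (induction n)
  case (Suc n)
  then have "integrable P (\<lambda>x. max (birkhoff_max g n x) (birkhoff_sum g (Suc n) x))"
    by (intro integrable_max integrable_birkhoff_sum)
  then show ?case
    by simp
next
  case 0
  have "birkhoff_max g 0 = (\<lambda>x. 0)"
    by auto
  then show ?case
    by simp
qed

lemma birkhoff_max_le_step: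
  assumes "0 < birkhoff_max g n x"
  shows "birkhoff_max g n x \<le> g x + birkhoff_max g n (T x)"
proof -
  from birkhoff_max_cases[of g n x] assms
  obtain k where k: "k \<in> {1..n}" "birkhoff_max g n x = birkhoff_sum g k x"
    by auto
  then obtain j where "k = Suc j" "j \<le> n"
    by (cases k) auto
  then show ?thesis
    using k birkhoff_sum_Suc[of g j x] birkhoff_sum_le_max[of j n g "T x"] by simp
qed

text \<open>Garsia's proof: on \<open>{0 < birkhoff_max g n}\<close> the function \<open>birkhoff_max g n - birkhoff_max g n \<circ> T\<close> is
  at most \<open>g\<close>, elsewhere it is at most \<open>0\<close>, and its integral vanishes.\<close>

theorem maximal_ergodic_lemma:
  assumes g: "integrable P g"
  shows "0 \<le> (\<integral>x. (if 0 < birkhoff_max g n x then g x else 0) \<partial>P)"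
proof -
  have iM: "integrable P (birkhoff_max g n)"
    using g by (rule integrable_birkhoff_max)
  have iMT: "integrable P (\<lambda>x. birkhoff_max g n (T x))"
    using integrable_comp_funpow_T[OF iM, of 1] by simp
  have [measurable]: "birkhoff_max g n \<in> borel_measurable P" "g \<in> borel_measurable P"
    using iM g by auto
  have "(\<integral>x. birkhoff_max g n (T x) \<partial>P) = (\<integral>x. birkhoff_max g n x \<partial>P)"
    using integral_comp_funpow_T[of "birkhoff_max g n" 1] by simp
  then have "0 = (\<integral>x. birkhoff_max g n x - birkhoff_max g n (T x) \<partial>P)"
    using iM iMT by simp
  also have "\<dots> \<le> (\<integral>x. (if 0 < birkhoff_max g n x then g x else 0) \<partial>P)"
  proof (rule integral_mono)
    show "integrable P (\<lambda>x. if 0 < birkhoff_max g n x then g x else 0)"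
      by (rule Bochner_Integration.integrable_bound[OF g]) auto
    show "birkhoff_max g n x - birkhoff_max g n (T x) \<le> (if 0 < birkhoff_max g n x then g x else 0)" for x
      using birkhoff_max_le_step[of g n x] birkhoff_max_nonneg[of g n x] birkhoff_max_nonneg[of g n "T x"]
      by auto
  qed (use iM iMT in simp)
  finally show ?thesis .
qed

lemma integral_nonneg_if_AE_birkhoff_sum_pos:
  assumes g: "integrable P g"
    and pos: "AE x in P. \<exists>k. 0 < birkhoff_sum g k x"
  shows "0 \<le> (\<integral>x. g x \<partial>P)"
proof -
  have [measurable]: "g \<in> borel_measurable P" "\<And>n. birkhoff_max g n \<in> borel_measurable P"
    using g integrable_birkhoff_max[OF g] by auto
  define s where "s n x = (if 0 < birkhoff_max g n x then g x else 0)" for n x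
  define l where "l x = (if \<exists>k. 0 < birkhoff_sum g k x then g x else 0)" for x
  have "(\<lambda>n. s n x) \<longlonglongrightarrow> l x" for x
  proof (cases "\<exists>k. 0 < birkhoff_sum g k x")
    case True
    then obtain k where "0 < birkhoff_sum g k x" ..
    then have "s n x = l x" if "k \<le> n" for n
      using True birkhoff_sum_le_max[OF that, of g x] by (auto simp: s_def l_def)
    then show ?thesis
      by (intro tendsto_eventually) (auto simp: eventually_sequentially)
  next
    case False
    then have "s n x = 0" for n
      using birkhoff_max_cases[of g n x] by (auto simp: s_def)
    then show ?thesis
      using False by (simp add: l_def)
  qed
  then have "(\<lambda>n. \<integral>x. s n x \<partial>P) \<longlonglongrightarrow> (\<integral>x. l x \<partial>P)"
    by (intro integral_dominated_convergence[where w="\<lambda>x. norm (g x)"])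
       (use g in \<open>auto simp: s_def l_def\<close>)
  moreover have "0 \<le> (\<integral>x. s n x \<partial>P)" for n
    unfolding s_def by (rule maximal_ergodic_lemma[OF g])
  ultimately have "0 \<le> (\<integral>x. l x \<partial>P)"
    by (simp add: LIMSEQ_le_const)
  also have "(\<integral>x. l x \<partial>P) = (\<integral>x. g x \<partial>P)"
    by (rule integral_cong_AE) (use pos in \<open>auto simp: l_def\<close>)
  finally show ?thesis .
qed

definition birkhoff_unbounded :: "('a \<Rightarrow> real) \<Rightarrow> 'a set" where
  "birkhoff_unbounded g = {x \<in> space P. \<forall>C::nat. \<exists>n. real C < birkhoff_sum g n x}"

lemma sets_birkhoff_unbounded:
  "g \<in> borel_measurable P \<Longrightarrow> birkhoff_unbounded g \<in> sets P"
  unfolding birkhoff_unbounded_def by measurable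

lemma birkhoff_unbounded_step:
  "(\<forall>C::nat. \<exists>n. real C < birkhoff_sum g n (T x)) \<longleftrightarrow> (\<forall>C::nat. \<exists>n. real C < birkhoff_sum g n x)"
proof -
  have nat_bound_iff: "(\<forall>C::nat. \<exists>n. real C < f n) \<longleftrightarrow> (\<forall>c. \<exists>n. c < f n)" for f :: "nat \<Rightarrow> real"
    by (meson le_less_trans real_arch_simple)
  have "(\<forall>c. \<exists>n. c < birkhoff_sum g n (T x)) \<longleftrightarrow> (\<forall>c. \<exists>n. c < birkhoff_sum g n x)"
  proof (intro iffI allI)
    fix c
    assume "\<forall>c. \<exists>n. c < birkhoff_sum g n (T x)"
    then obtain n where "c - g x < birkhoff_sum g n (T x)"
      by blast
    then have "c < birkhoff_sum g (Suc n) x"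
      by (simp add: birkhoff_sum_Suc)
    then show "\<exists>n. c < birkhoff_sum g n x" ..
  next
    fix c
    assume "\<forall>c. \<exists>n. c < birkhoff_sum g n x"
    then obtain n where n: "max (c + g x) 0 < birkhoff_sum g n x"
      by blast
    then obtain j where "n = Suc j"
      by (cases n) auto
    then have "c < birkhoff_sum g j (T x)"
      using n by (simp add: birkhoff_sum_Suc)
    then show "\<exists>n. c < birkhoff_sum g n (T x)" ..
  qed
  then show ?thesis
    unfolding nat_bound_iff .
qed

lemma vimage_birkhoff_unbounded: "T -` birkhoff_unbounded g \<inter> space P = birkhoff_unbounded g"
  using measurable_space[OF measurable_T] birkhoff_unbounded_step[of g]
  by (auto simp: birkhoff_unbounded_def)

end

locale ergodic = mpt +
  assumes invariant_trivial:
    "\<And>A. A \<in> sets P \<Longrightarrow> T -` A \<inter> space P = A \<Longrightarrow> measure P A = 0 \<or> measure P A = 1"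
begin

text \<open>The set where the Birkhoff sums of \<open>f - b\<close> are unbounded is invariant, so it is null or of
  full measure; full measure would make \<open>\<integral>(f - b) \<ge> 0\<close> by the maximal ergodic lemma.\<close>

lemma AE_birkhoff_sum_bounded_above:
  fixes f :: "'a \<Rightarrow> real"
  assumes f: "integrable P f" and b: "(\<integral>x. f x \<partial>P) < b"
  shows "AE x in P. \<exists>C. \<forall>n. birkhoff_sum f n x \<le> C + real n * b"
proof -
  define g where "g = (\<lambda>x. f x - b)"
  have g: "integrable P g"
    unfolding g_def using f by auto
  then have W: "birkhoff_unbounded g \<in> sets P"
    by (intro sets_birkhoff_unbounded) auto
  have "measure P (birkhoff_unbounded g) \<noteq> 1"
  proof
    assume "measure P (birkhoff_unbounded g) = 1"
    then have "AE x in P. x \<in> birkhoff_unbounded g"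
      using W by (simp add: prob_eq_1)
    then have "AE x in P. \<exists>k. 0 < birkhoff_sum g k x"
    proof eventually_elim
      case (elim x)
      then obtain n where "real 0 < birkhoff_sum g n x"
        unfolding birkhoff_unbounded_def by blast
      then show ?case
        by auto
    qed
    then have "0 \<le> (\<integral>x. g x \<partial>P)"
      by (rule integral_nonneg_if_AE_birkhoff_sum_pos[OF g])
    then show False
      using f b by (simp add: g_def prob_space)
  qed
  then have "birkhoff_unbounded g \<in> null_sets P"
    using invariant_trivial[OF W vimage_birkhoff_unbounded] W
    by (simp add: emeasure_eq_measure null_setsI)
  then have "AE x in P. x \<notin> birkhoff_unbounded g"
    by (rule AE_not_in)
  with AE_space show ?thesis
  proof eventually_elim
    case (elim x)
    then have "\<not> (\<forall>C::nat. \<exists>n. real C < birkhoff_sum g n x)"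
      by (simp add: birkhoff_unbounded_def)
    then obtain C :: nat where "\<forall>n. birkhoff_sum g n x \<le> real C"
      by (auto simp: not_less)
    then have "\<forall>n. birkhoff_sum f n x \<le> real C + real n * b"
      by (simp add: g_def birkhoff_sum_diff_const algebra_simps)
    then show ?case ..
  qed
qed

lemma AE_birkhoff_average_eventually_less:
  fixes f :: "'a \<Rightarrow> real"
  assumes f: "integrable P f"
  shows "AE x in P. \<forall>a > (\<integral>x. f x \<partial>P). \<forall>\<^sub>F n in sequentially. birkhoff_sum f n x / real n < a"
proof -
  define c where "c = (\<integral>x. f x \<partial>P)"
  have "AE x in P. \<forall>j::nat. \<exists>C. \<forall>n. birkhoff_sum f n x \<le> C + real n * (c + 1 / Suc j)"
    unfolding AE_all_countable c_def by (intro allI AE_birkhoff_sum_bounded_above f) simp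
  then show ?thesis
    unfolding c_def[symmetric]
  proof eventually_elim
    case (elim x)
    show ?case
      using eventually_average_less[of "\<lambda>n. birkhoff_sum f n x", OF elim] by blast
  qed
qed

theorem birkhoff_ergodic_theorem:
  fixes f :: "'a \<Rightarrow> real"
  assumes f: "integrable P f"
  shows "AE x in P. (\<lambda>n. birkhoff_sum f n x / real n) \<longlonglongrightarrow> (\<integral>x. f x \<partial>P)"
  using AE_birkhoff_average_eventually_less[OF f]
    AE_birkhoff_average_eventually_less[OF integrable_minus[OF f]]
proof eventually_elim
  case (elim x)
  show ?case
  proof (rule order_tendstoI)
    fix a assume "a < (\<integral>x. f x \<partial>P)"
    then show "\<forall>\<^sub>F n in sequentially. a < birkhoff_sum f n x / real n"
      using elim(2)[rule_format, of "- a"] by (simp add: birkhoff_sum_uminus)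
  qed (use elim(1) in simp)
qed

end

section \<open>Ergodic averages along a random path\<close>

lemma (in prob_space) tendsto_prob_deviation_of_AE:
  fixes f :: "nat \<Rightarrow> 'a \<Rightarrow> real"
  assumes [measurable]: "\<And>n. f n \<in> borel_measurable M"
    and lim: "AE x in M. (\<lambda>n. f n x) \<longlonglongrightarrow> c" and d: "0 < d"
  shows "(\<lambda>n. prob {x \<in> space M. d \<le> \<bar>f n x - c\<bar>}) \<longlonglongrightarrow> 0"
proof -
  define A where "A n = {x \<in> space M. d \<le> \<bar>f n x - c\<bar>}" for n
  have [measurable]: "A n \<in> sets M" for n
    unfolding A_def by measurable
  have "AE x in M. (\<lambda>n. indicator (A n) x :: real) \<longlonglongrightarrow> 0"
    using lim
  proof eventually_elim
    case (elim x)
    from tendstoD[OF elim d] have "\<forall>\<^sub>F n in sequentially. indicator (A n) x = (0::real)"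
      by eventually_elim (auto simp: A_def dist_real_def)
    then show ?case
      by (rule tendsto_eventually)
  qed
  then have "(\<lambda>n. \<integral>x. indicator (A n) x \<partial>M) \<longlonglongrightarrow> (\<integral>x. (0::real) \<partial>M)"
    by (intro integral_dominated_convergence[where w="\<lambda>_. 1"]) (auto simp: indicator_def)
  then show ?thesis
    by (simp add: A_def[symmetric])
qed

lemma tendsto_window_average:
  fixes a :: "nat \<Rightarrow> real"
  assumes lim: "(\<lambda>n. (\<Sum>i<n. a i) / real n) \<longlonglongrightarrow> c"
  shows "(\<lambda>n. (\<Sum>i\<in>{m<..n}. a i) / real (n - m)) \<longlonglongrightarrow> c"
proof (rule LIMSEQ_offset[where k="Suc m"])
  define A where "A n = (\<Sum>i<n. a i)" for n
  have window: "(\<Sum>i\<in>{m<..k + Suc m}. a i) / real (k + Suc m - m)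
      = A (k + Suc (Suc m)) / real (k + Suc (Suc m)) * (1 + real (Suc m) * (1 / real (Suc k)))
        - A (Suc m) * (1 / real (Suc k))" for k
  proof -
    have "{m<..k + Suc m} = {Suc m..<k + Suc (Suc m)}"
      by auto
    moreover have "A (Suc m) + (\<Sum>i\<in>{Suc m..<k + Suc (Suc m)}. a i) = A (k + Suc (Suc m))"
      unfolding A_def lessThan_atLeast0 by (rule sum.atLeastLessThan_concat) auto
    ultimately have "A (Suc m) + (\<Sum>i\<in>{m<..k + Suc m}. a i) = A (k + Suc (Suc m))"
      by simp
    then show ?thesis
      by (simp add: divide_simps)
  qed
  have "(\<lambda>k. A (k + Suc (Suc m)) / real (k + Suc (Suc m))) \<longlonglongrightarrow> c"
    unfolding A_def by (rule LIMSEQ_ignore_initial_segment[OF lim])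
  moreover have "(\<lambda>k. 1 / real (Suc k)) \<longlonglongrightarrow> 0"
    by (rule LIMSEQ_Suc[OF lim_const_over_n])
  ultimately have "(\<lambda>k. A (k + Suc (Suc m)) / real (k + Suc (Suc m)) * (1 + real (Suc m) * (1 / real (Suc k)))
      - A (Suc m) * (1 / real (Suc k))) \<longlonglongrightarrow> c * (1 + real (Suc m) * 0) - A (Suc m) * 0"
    by (intro tendsto_intros)
  then show "(\<lambda>k. (\<Sum>i\<in>{m<..k + Suc m}. a i) / real (k + Suc m - m)) \<longlonglongrightarrow> c"
    unfolding window by (simp only: mult_zero_right add_0_right mult_1_right diff_zero)
qed

context mpt
begin

text \<open>For \<open>n \<le> m\<close> this is \<open>0\<close>, as \<open>x / 0 = 0\<close>.\<close>

definition window_average :: "('a \<Rightarrow> real) \<Rightarrow> nat \<Rightarrow> nat \<Rightarrow> 'a \<Rightarrow> real" where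
  "window_average g m n x = (\<Sum>t\<in>{m<..n}. g ((T ^^ t) x)) / real (n - m)"

lemma borel_measurable_window_average [measurable]:
  assumes [measurable]: "g \<in> borel_measurable P"
  shows "window_average g m n \<in> borel_measurable P"
  unfolding window_average_def using measurable_funpow_T by measurable

end

lemma (in ergodic) window_average_tendsto_in_prob:
  fixes M :: "'c measure" and X :: "'c \<Rightarrow> 'a" and g :: "'a \<Rightarrow> real"
  assumes M: "prob_space M" and X: "X \<in> measurable M P" "distr M P X = P"
    and g: "integrable P g" and d: "0 < d"
  shows "(\<lambda>n. measure M {w \<in> space M. d \<le> \<bar>window_average g m n (X w) - (\<integral>x. g x \<partial>P)\<bar>}) \<longlonglongrightarrow> 0"
proof (rule prob_space.tendsto_prob_deviation_of_AE[OF M _ _ d])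
  show "(\<lambda>w. window_average g m n (X w)) \<in> borel_measurable M" for n
    using g X(1) by measurable
  have "AE x in distr M P X. (\<lambda>n. window_average g m n x) \<longlonglongrightarrow> (\<integral>x. g x \<partial>P)"
    unfolding X(2) using birkhoff_ergodic_theorem[OF g]
    by eventually_elim (simp add: window_average_def birkhoff_sum_def tendsto_window_average)
  then show "AE w in M. (\<lambda>n. window_average g m n (X w)) \<longlonglongrightarrow> (\<integral>x. g x \<partial>P)"
    by (rule AE_distrD[OF X(1)])
qed

section \<open>Consistency of minimum contrast estimators under ergodicity\<close>

lemma SUP_eq_SUP_dense:
  fixes f :: "'b::first_countable_topology \<Rightarrow> 'c::{complete_linorder, linorder_topology}"
  assumes f: "continuous_on \<Theta> f" and D: "D \<subseteq> \<Theta>" "\<Theta> \<subseteq> closure D"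
  shows "(SUP \<theta>\<in>\<Theta>. f \<theta>) = (SUP \<theta>\<in>D. f \<theta>)"
proof (rule antisym)
  show "(SUP \<theta>\<in>\<Theta>. f \<theta>) \<le> (SUP \<theta>\<in>D. f \<theta>)"
  proof (rule SUP_least)
    fix \<theta> assume \<theta>: "\<theta> \<in> \<Theta>"
    then have "\<theta> \<in> closure D"
      using D(2) by blast
    then obtain c where c: "\<forall>k. c k \<in> D" "c \<longlonglongrightarrow> \<theta>"
      unfolding closure_sequential by blast
    have "\<forall>k. c k \<in> \<Theta>"
      using c(1) D(1) by blast
    then have lim: "(\<lambda>k. f (c k)) \<longlonglongrightarrow> f \<theta>"
      by (intro continuous_on_tendsto_compose[OF f c(2) \<theta>] always_eventually)
    have bound: "f (c k) \<le> (SUP \<theta>\<in>D. f \<theta>)" for k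
      using c(1) by (blast intro: SUP_upper)
    show "f \<theta> \<le> (SUP \<theta>\<in>D. f \<theta>)"
      by (rule LIMSEQ_le_const2[OF lim]) (use bound in blast)
  qed
  show "(SUP \<theta>\<in>D. f \<theta>) \<le> (SUP \<theta>\<in>\<Theta>. f \<theta>)"
    using D(1) by (rule SUP_subset_mono) simp
qed

lemma borel_measurable_SUP_continuous:
  fixes f :: "'b::{metric_space, second_countable_topology} \<Rightarrow> 'a \<Rightarrow> ennreal"
  assumes meas: "\<And>\<theta>. \<theta> \<in> \<Theta> \<Longrightarrow> f \<theta> \<in> borel_measurable M"
    and cont: "\<And>x. continuous_on \<Theta> (\<lambda>\<theta>. f \<theta> x)"
  shows "(\<lambda>x. SUP \<theta>\<in>\<Theta>. f \<theta> x) \<in> borel_measurable M"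
proof -
  obtain D where D: "countable D" "D \<subseteq> \<Theta>" "\<Theta> \<subseteq> closure D"
    by (rule separable)
  have "(\<lambda>x. SUP \<theta>\<in>D. f \<theta> x) \<in> borel_measurable M"
    using D(1,2) meas by (intro borel_measurable_SUP) auto
  moreover have "(SUP \<theta>\<in>\<Theta>. f \<theta> x) = (SUP \<theta>\<in>D. f \<theta> x)" for x
    by (rule SUP_eq_SUP_dense[OF cont D(2,3)])
  ultimately show ?thesis
    by simp
qed

locale ergodic_contrast = ergodic P T for P :: "'a measure" and T +
  fixes contrast :: "'b::{metric_space, second_countable_topology} \<Rightarrow> 'a \<Rightarrow> real"
    and \<Theta> :: "'b set"
  assumes compact_params: "compact \<Theta>"
    and measurable_contrast: "\<And>\<theta>. \<theta> \<in> \<Theta> \<Longrightarrow> contrast \<theta> \<in> borel_measurable P"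
    and continuous_contrast: "\<And>x. continuous_on \<Theta> (\<lambda>\<theta>. contrast \<theta> x)"
    and envelope_integrable: "(\<integral>\<^sup>+ x. (SUP \<theta>\<in>\<Theta>. ennreal \<bar>contrast \<theta> x\<bar>) \<partial>P) < \<infinity>"
begin

text \<open>Countable, so that the local infima of the contrast below are measurable.\<close>

definition dense_params :: "'b set" where
  "dense_params = (SOME D. countable D \<and> D \<subseteq> \<Theta> \<and> \<Theta> \<subseteq> closure D)"

lemma dense_params: "countable dense_params" "dense_params \<subseteq> \<Theta>" "\<Theta> \<subseteq> closure dense_params"
proof -
  obtain D where "countable D \<and> D \<subseteq> \<Theta> \<and> \<Theta> \<subseteq> closure D"
    using separable by metis
  then have "countable dense_params \<and> dense_params \<subseteq> \<Theta> \<and> \<Theta> \<subseteq> closure dense_params"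
    unfolding dense_params_def by (rule someI)
  then show "countable dense_params" "dense_params \<subseteq> \<Theta>" "\<Theta> \<subseteq> closure dense_params"
    by auto
qed

lemma dense_params_sequence:
  assumes "\<theta> \<in> \<Theta>" "open U" "\<theta> \<in> U"
  obtains c where "\<And>k. c k \<in> dense_params \<inter> U" "c \<longlonglongrightarrow> \<theta>"
proof -
  have "\<theta> \<in> closure (U \<inter> dense_params)"
    using open_Int_closure_subset[OF assms(2)] dense_params(3) assms(1,3) by blast
  then show ?thesis
    using that unfolding closure_sequential by (metis Int_commute)
qed

lemma contrast_tendsto:
  assumes "\<theta> \<in> \<Theta>" "\<And>k. c k \<in> \<Theta>" "c \<longlonglongrightarrow> \<theta>"
  shows "(\<lambda>k. contrast (c k) x) \<longlonglongrightarrow> contrast \<theta> x"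
  by (rule continuous_on_tendsto_compose[OF continuous_contrast assms(3,1)]) (use assms(2) in auto)

definition envelope :: "'a \<Rightarrow> ennreal" where
  "envelope x = (SUP \<theta>\<in>\<Theta>. ennreal \<bar>contrast \<theta> x\<bar>)"

lemma borel_measurable_envelope [measurable]: "envelope \<in> borel_measurable P"
proof -
  have cont: "continuous_on \<Theta> (\<lambda>\<theta>. ennreal \<bar>contrast \<theta> x\<bar>)" for x
    by (rule continuous_on_ennreal[OF continuous_on_rabs[OF continuous_contrast]])
  show ?thesis
    unfolding envelope_def[abs_def] by (rule borel_measurable_SUP_continuous[OF _ cont]) (use measurable_contrast in auto)
qed

lemma AE_envelope_finite: "AE x in P. envelope x \<noteq> \<infinity>"
  using envelope_integrable unfolding envelope_def[symmetric]
  by (intro nn_integral_noteq_infinite) auto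

lemma AE_envelope_finite_orbit: "AE x in P. \<forall>t. envelope ((T ^^ t) x) \<noteq> \<infinity>"
  unfolding AE_all_countable
proof
  fix t
  show "AE x in P. envelope ((T ^^ t) x) \<noteq> \<infinity>"
  proof (rule AE_distrD[OF measurable_funpow_T])
    show "AE x in distr P P (T ^^ t). envelope x \<noteq> \<infinity>"
      unfolding distr_funpow_T by (rule AE_envelope_finite)
  qed
qed

definition envelope_bound :: "'a \<Rightarrow> real" where
  "envelope_bound x = enn2real (envelope x)"

lemma abs_envelope_bound [simp]: "\<bar>envelope_bound x\<bar> = envelope_bound x"
  by (simp add: envelope_bound_def)

lemma integrable_envelope_bound: "integrable P envelope_bound"
proof (rule integrableI_bounded)
  show "envelope_bound \<in> borel_measurable P"
    unfolding envelope_bound_def by measurable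
  have "(\<integral>\<^sup>+ x. ennreal (norm (envelope_bound x)) \<partial>P) \<le> (\<integral>\<^sup>+ x. envelope x \<partial>P)"
    unfolding envelope_bound_def by (intro nn_integral_mono) (simp add: ennreal_enn2real_if)
  then show "(\<integral>\<^sup>+ x. ennreal (norm (envelope_bound x)) \<partial>P) < \<infinity>"
    using envelope_integrable unfolding envelope_def[symmetric] by (simp add: order_le_less_trans)
qed

lemma abs_contrast_le_envelope_bound:
  assumes "envelope x \<noteq> \<infinity>" "\<theta> \<in> \<Theta>"
  shows "\<bar>contrast \<theta> x\<bar> \<le> envelope_bound x"
proof -
  have "ennreal \<bar>contrast \<theta> x\<bar> \<le> envelope x"
    unfolding envelope_def using assms(2) by (rule SUP_upper)
  then show ?thesis
    using assms(1) enn2real_mono[of "ennreal \<bar>contrast \<theta> x\<bar>" "envelope x"]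
    by (simp add: envelope_bound_def less_top)
qed

lemma integrable_contrast:
  assumes \<theta>: "\<theta> \<in> \<Theta>"
  shows "integrable P (contrast \<theta>)"
proof (rule Bochner_Integration.integrable_bound[OF integrable_envelope_bound measurable_contrast[OF \<theta>]])
  show "AE x in P. norm (contrast \<theta> x) \<le> norm (envelope_bound x)"
    using AE_envelope_finite by eventually_elim (simp add: abs_contrast_le_envelope_bound \<theta>)
qed

definition local_inf :: "'b \<Rightarrow> nat \<Rightarrow> 'a \<Rightarrow> real" where
  "local_inf \<theta> j x = (INF c\<in>dense_params \<inter> ball \<theta> (1 / Suc j). contrast c x)"

lemma local_inf_nonempty:
  assumes "\<theta> \<in> \<Theta>"
  shows "dense_params \<inter> ball \<theta> (1 / Suc j) \<noteq> {}"
proof -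
  have centre: "\<theta> \<in> ball \<theta> (1 / Suc j)"
    by simp
  obtain c where "\<And>k. c k \<in> dense_params \<inter> ball \<theta> (1 / Suc j)" "c \<longlonglongrightarrow> \<theta>"
    using dense_params_sequence[OF assms open_ball centre] by blast
  then show ?thesis
    by blast
qed

lemma borel_measurable_local_inf [measurable]: "local_inf \<theta> j \<in> borel_measurable P"
  unfolding local_inf_def
proof (rule borel_measurable_cINF_real)
  show "countable (dense_params \<inter> ball \<theta> (1 / Suc j))"
    using dense_params(1) by (rule countable_Int1)
  show "contrast c \<in> borel_measurable P" if "c \<in> dense_params \<inter> ball \<theta> (1 / Suc j)" for c
    using that dense_params(2) measurable_contrast by blast
qed

lemma bdd_below_local_contrast:
  assumes "envelope x \<noteq> \<infinity>"
  shows "bdd_below ((\<lambda>c. contrast c x) ` (dense_params \<inter> B))"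
proof (rule bdd_belowI)
  fix v assume "v \<in> (\<lambda>c. contrast c x) ` (dense_params \<inter> B)"
  then obtain c where "c \<in> \<Theta>" "v = contrast c x"
    using dense_params(2) by auto
  then show "- envelope_bound x \<le> v"
    using abs_contrast_le_envelope_bound[OF assms, of c] by simp
qed

lemma local_inf_le:
  assumes "envelope x \<noteq> \<infinity>" "\<theta>' \<in> \<Theta>" "\<theta>' \<in> ball \<theta> (1 / Suc j)"
  shows "local_inf \<theta> j x \<le> contrast \<theta>' x"
proof -
  obtain c where c: "\<And>k. c k \<in> dense_params \<inter> ball \<theta> (1 / Suc j)" "c \<longlonglongrightarrow> \<theta>'"
    using dense_params_sequence[OF assms(2) open_ball assms(3)] by blast
  have lim: "(\<lambda>k. contrast (c k) x) \<longlonglongrightarrow> contrast \<theta>' x"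
    using c dense_params(2) by (intro contrast_tendsto assms(2)) auto
  have bound: "local_inf \<theta> j x \<le> contrast (c k) x" for k
    unfolding local_inf_def by (intro cINF_lower bdd_below_local_contrast assms(1) c(1))
  show ?thesis
    by (rule LIMSEQ_le_const[OF lim]) (use bound in blast)
qed

lemma abs_local_inf_le_envelope_bound:
  assumes "envelope x \<noteq> \<infinity>" "\<theta> \<in> \<Theta>"
  shows "\<bar>local_inf \<theta> j x\<bar> \<le> envelope_bound x"
proof -
  have "- envelope_bound x \<le> local_inf \<theta> j x"
    unfolding local_inf_def using local_inf_nonempty[OF assms(2)] dense_params(2)
    by (intro cINF_greatest) (auto dest!: abs_contrast_le_envelope_bound[OF assms(1)])
  moreover have "local_inf \<theta> j x \<le> contrast \<theta> x"
    by (rule local_inf_le[OF assms(1,2)]) simp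
  ultimately show ?thesis
    using abs_contrast_le_envelope_bound[OF assms] by linarith
qed

lemma integrable_local_inf:
  assumes \<theta>: "\<theta> \<in> \<Theta>"
  shows "integrable P (local_inf \<theta> j)"
proof (rule Bochner_Integration.integrable_bound[OF integrable_envelope_bound borel_measurable_local_inf])
  show "AE x in P. norm (local_inf \<theta> j x) \<le> norm (envelope_bound x)"
    using AE_envelope_finite by eventually_elim (simp add: abs_local_inf_le_envelope_bound \<theta>)
qed

lemma local_inf_tendsto:
  assumes fin: "envelope x \<noteq> \<infinity>" and \<theta>: "\<theta> \<in> \<Theta>"
  shows "(\<lambda>j. local_inf \<theta> j x) \<longlonglongrightarrow> contrast \<theta> x"
proof -
  have "\<forall>j. \<exists>c. c \<in> dense_params \<inter> ball \<theta> (1 / Suc j) \<and> contrast c x < local_inf \<theta> j x + 1 / Suc j"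
  proof
    fix j
    have ne: "(\<lambda>c. contrast c x) ` (dense_params \<inter> ball \<theta> (1 / Suc j)) \<noteq> {}"
      using local_inf_nonempty[OF \<theta>] by simp
    have "Inf ((\<lambda>c. contrast c x) ` (dense_params \<inter> ball \<theta> (1 / Suc j))) < local_inf \<theta> j x + 1 / Suc j"
      by (simp add: local_inf_def)
    from cInf_lessD[OF ne this] show "\<exists>c. c \<in> dense_params \<inter> ball \<theta> (1 / Suc j) \<and> contrast c x < local_inf \<theta> j x + 1 / Suc j"
      by (elim bexE imageE) auto
  qed
  from choice[OF this] obtain c
    where c0: "\<forall>j. c j \<in> dense_params \<inter> ball \<theta> (1 / Suc j) \<and> contrast (c j) x < local_inf \<theta> j x + 1 / Suc j" ..
  have c: "c j \<in> \<Theta>" "dist (c j) \<theta> \<le> 1 / Suc j" "contrast (c j) x - 1 / Suc j \<le> local_inf \<theta> j x" for j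
    using c0[rule_format, of j] dense_params(2) by (auto simp: dist_commute)
  have "\<forall>j. norm (dist (c j) \<theta>) \<le> 1 / Suc j"
    using c(2) by simp
  then have "(\<lambda>j. dist (c j) \<theta>) \<longlonglongrightarrow> 0"
    by (rule Lim_null_comparison[OF always_eventually LIMSEQ_Suc[OF lim_const_over_n[of 1]]])
  then have "c \<longlonglongrightarrow> \<theta>"
    by (rule tendsto_dist_iff[THEN iffD2])
  then have "(\<lambda>j. contrast (c j) x) \<longlonglongrightarrow> contrast \<theta> x"
    by (rule contrast_tendsto[OF \<theta> c(1)])
  then have lower: "(\<lambda>j. contrast (c j) x - 1 / Suc j) \<longlonglongrightarrow> contrast \<theta> x"
    using tendsto_diff[OF _ LIMSEQ_Suc[OF lim_const_over_n[of 1]]] by (simp only: diff_zero)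
  have upper: "local_inf \<theta> j x \<le> contrast \<theta> x" for j
    by (intro local_inf_le fin \<theta>) simp
  show ?thesis
  proof (rule tendsto_sandwich[OF always_eventually always_eventually lower tendsto_const])
    show "\<forall>j. contrast (c j) x - 1 / Suc j \<le> local_inf \<theta> j x"
      by (intro allI c(3))
    show "\<forall>j. local_inf \<theta> j x \<le> contrast \<theta> x"
      by (intro allI upper)
  qed
qed

lemma integral_local_inf_tendsto:
  assumes \<theta>: "\<theta> \<in> \<Theta>"
  shows "(\<lambda>j. \<integral>x. local_inf \<theta> j x \<partial>P) \<longlonglongrightarrow> (\<integral>x. contrast \<theta> x \<partial>P)"
proof (rule integral_dominated_convergence[where M=P and w=envelope_bound and s="local_inf \<theta>" and f="contrast \<theta>"])
  show "AE x in P. (\<lambda>j. local_inf \<theta> j x) \<longlonglongrightarrow> contrast \<theta> x"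
    using AE_envelope_finite by eventually_elim (rule local_inf_tendsto[OF _ \<theta>])
  show "AE x in P. norm (local_inf \<theta> j x) \<le> envelope_bound x" for j
    using AE_envelope_finite by eventually_elim (simp add: abs_local_inf_le_envelope_bound \<theta>)
  show "contrast \<theta> \<in> borel_measurable P"
    by (rule measurable_contrast[OF \<theta>])
  show "local_inf \<theta> j \<in> borel_measurable P" for j
    by (rule borel_measurable_local_inf)
  show "integrable P envelope_bound"
    by (rule integrable_envelope_bound)
qed

lemma finite_local_inf_cover:
  assumes K: "compact K" "K \<subseteq> \<Theta>" and above: "\<And>\<theta>. \<theta> \<in> K \<Longrightarrow> a < (\<integral>x. contrast \<theta> x \<partial>P)"
  obtains F J d where "finite F" "F \<subseteq> K" "K \<subseteq> (\<Union>\<theta>\<in>F. ball \<theta> (1 / Suc (J \<theta>)))" "0 < d"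
    "\<And>\<theta>. \<theta> \<in> F \<Longrightarrow> a + d \<le> (\<integral>x. local_inf \<theta> (J \<theta>) x \<partial>P)"
proof -
  have "\<exists>j. a < (\<integral>x. local_inf \<theta> j x \<partial>P)" if "\<theta> \<in> K" for \<theta>
  proof -
    have "\<forall>\<^sub>F j in sequentially. a < (\<integral>x. local_inf \<theta> j x \<partial>P)"
      using K(2) that by (intro order_tendstoD(1)[OF integral_local_inf_tendsto above[OF that]]) auto
    then show ?thesis
      by (auto simp: eventually_sequentially)
  qed
  then obtain J where J: "\<And>\<theta>. \<theta> \<in> K \<Longrightarrow> a < (\<integral>x. local_inf \<theta> (J \<theta>) x \<partial>P)"
    by metis
  obtain F where F: "F \<subseteq> K" "finite F" "K \<subseteq> (\<Union>\<theta>\<in>F. ball \<theta> (1 / Suc (J \<theta>)))"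
    by (rule compactE_image[OF K(1), of K "\<lambda>\<theta>. ball \<theta> (1 / Suc (J \<theta>))"]) auto
  define d where "d = Min (insert 1 ((\<lambda>\<theta>. (\<integral>x. local_inf \<theta> (J \<theta>) x \<partial>P) - a) ` F))"
  have "0 < d"
    unfolding d_def using F J by (subst Min_gr_iff) auto
  moreover have "a + d \<le> (\<integral>x. local_inf \<theta> (J \<theta>) x \<partial>P)" if "\<theta> \<in> F" for \<theta>
  proof -
    have "d \<le> (\<integral>x. local_inf \<theta> (J \<theta>) x \<partial>P) - a"
      unfolding d_def using F(2) that by (intro Min_le) auto
    then show ?thesis
      by simp
  qed
  ultimately show ?thesis
    using F that by blast
qed

lemma window_average_local_inf_le:
  assumes "\<And>t. envelope ((T ^^ t) x) \<noteq> \<infinity>" "\<theta>' \<in> \<Theta>" "\<theta>' \<in> ball \<theta> (1 / Suc j)"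
  shows "window_average (local_inf \<theta> j) m n x \<le> window_average (contrast \<theta>') m n x"
  unfolding window_average_def
proof (rule divide_right_mono)
  show "(\<Sum>t\<in>{m<..n}. local_inf \<theta> j ((T ^^ t) x)) \<le> (\<Sum>t\<in>{m<..n}. contrast \<theta>' ((T ^^ t) x))"
    by (rule sum_mono) (rule local_inf_le[OF assms])
qed simp

text \<open>Wald's argument: the compact set of parameters in \<open>closure A\<close> is covered by finitely many balls,
  each with a local infimum of the contrast whose mean exceeds the minimum by at least \<open>d\<close>; if the
  minimiser lies in such a ball, the window average of that local infimum or of \<open>contrast \<theta>0\<close>
  deviates from its mean by at least \<open>d / 2\<close>.\<close>

theorem minimum_contrast_consistent:
  fixes M :: "'c measure" and X :: "'c \<Rightarrow> 'a" and \<theta>h :: "nat \<Rightarrow> 'c \<Rightarrow> 'b"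
  assumes M: "prob_space M" and X: "X \<in> measurable M P" "distr M P X = P"
    and \<theta>0: "\<theta>0 \<in> \<Theta>"
    and identifiable: "\<And>\<theta>. \<theta> \<in> \<Theta> \<Longrightarrow> \<theta> \<noteq> \<theta>0 \<Longrightarrow> (\<integral>x. contrast \<theta>0 x \<partial>P) < (\<integral>x. contrast \<theta> x \<partial>P)"
    and minimizer: "\<And>n w. w \<in> space M \<Longrightarrow> \<theta>h n w \<in> \<Theta> \<and> (\<forall>\<theta>\<in>\<Theta>.
       (\<Sum>t\<in>{m<..n}. contrast (\<theta>h n w) ((T ^^ t) (X w))) \<le> (\<Sum>t\<in>{m<..n}. contrast \<theta> ((T ^^ t) (X w))))"
    and A: "\<theta>0 \<notin> closure A"
  shows "(\<lambda>n. measure M {w \<in> space M. \<theta>h n w \<in> A}) \<longlonglongrightarrow> 0"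
proof -
  interpret M: prob_space M
    by (rule M)
  define K where "K = \<Theta> \<inter> closure A"
  have K: "compact K" "K \<subseteq> \<Theta>"
    using compact_params by (auto simp: K_def compact_Int_closed)
  have above: "(\<integral>x. contrast \<theta>0 x \<partial>P) < (\<integral>x. contrast \<theta> x \<partial>P)" if "\<theta> \<in> K" for \<theta>
    using identifiable A that by (auto simp: K_def)
  obtain F J d where F: "finite F" "F \<subseteq> K" "K \<subseteq> (\<Union>\<theta>\<in>F. ball \<theta> (1 / Suc (J \<theta>)))" "0 < d"
    "\<And>\<theta>. \<theta> \<in> F \<Longrightarrow> (\<integral>x. contrast \<theta>0 x \<partial>P) + d \<le> (\<integral>x. local_inf \<theta> (J \<theta>) x \<partial>P)"
    using finite_local_inf_cover[OF K above] by metis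
  define g where "g i = (case i of None \<Rightarrow> contrast \<theta>0 | Some \<theta> \<Rightarrow> local_inf \<theta> (J \<theta>))" for i
  define I where "I = insert None (Some ` F)"
  define dev where "dev i n = {w \<in> space M. d / 2 \<le> \<bar>window_average (g i) m n (X w) - (\<integral>x. g i x \<partial>P)\<bar>}"
    for i n
  have g: "integrable P (g i)" if "i \<in> I" for i
    using that F(2) K(2) \<theta>0
    by (auto simp: I_def g_def integrable_contrast integrable_local_inf split: option.split)
  have dev: "dev i n \<in> sets M" if "i \<in> I" for i n
    unfolding dev_def using g[OF that] X(1) by measurable
  have "AE x in distr M P X. \<forall>t. envelope ((T ^^ t) x) \<noteq> \<infinity>"
    unfolding X(2) by (rule AE_envelope_finite_orbit)
  then have "AE w in M. \<forall>t. envelope ((T ^^ t) (X w)) \<noteq> \<infinity>"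
    by (rule AE_distrD[OF X(1)])
  then obtain N where N: "{w \<in> space M. \<not> (\<forall>t. envelope ((T ^^ t) (X w)) \<noteq> \<infinity>)} \<subseteq> N"
    "emeasure M N = 0" "N \<in> sets M"
    by (rule AE_E)
  have cover: "{w \<in> space M. \<theta>h n w \<in> A} \<subseteq> N \<union> (\<Union>i\<in>I. dev i n)" for n
  proof
    fix w assume w: "w \<in> {w \<in> space M. \<theta>h n w \<in> A}"
    show "w \<in> N \<union> (\<Union>i\<in>I. dev i n)"
    proof (cases "w \<in> N")
      case False
      then have fin: "\<And>t. envelope ((T ^^ t) (X w)) \<noteq> \<infinity>"
        using N(1) w by auto
      have \<theta>h: "\<theta>h n w \<in> \<Theta>"
        "\<forall>\<theta>\<in>\<Theta>. (\<Sum>t\<in>{m<..n}. contrast (\<theta>h n w) ((T ^^ t) (X w))) \<le> (\<Sum>t\<in>{m<..n}. contrast \<theta> ((T ^^ t) (X w)))"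
        using minimizer w by auto
      then have "\<theta>h n w \<in> K"
        using w closure_subset by (auto simp: K_def)
      then obtain \<theta> where \<theta>: "\<theta> \<in> F" "\<theta>h n w \<in> ball \<theta> (1 / Suc (J \<theta>))"
        using F(3) by auto
      have "window_average (g (Some \<theta>)) m n (X w) \<le> window_average (contrast (\<theta>h n w)) m n (X w)"
        using window_average_local_inf_le[OF fin \<theta>h(1) \<theta>(2)] by (simp add: g_def)
      also have "\<dots> \<le> window_average (g None) m n (X w)"
        unfolding g_def window_average_def using \<theta>h(2) \<theta>0 by (auto intro: divide_right_mono)
      finally have "window_average (g (Some \<theta>)) m n (X w) \<le> window_average (g None) m n (X w)" .
      moreover have "(\<integral>x. g None x \<partial>P) + d \<le> (\<integral>x. g (Some \<theta>) x \<partial>P)"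
        using F(5)[OF \<theta>(1)] by (simp add: g_def)
      ultimately have "d / 2 \<le> \<bar>window_average (g None) m n (X w) - (\<integral>x. g None x \<partial>P)\<bar>
          \<or> d / 2 \<le> \<bar>window_average (g (Some \<theta>)) m n (X w) - (\<integral>x. g (Some \<theta>) x \<partial>P)\<bar>"
        by linarith
      then show ?thesis
        using w \<theta>(1) by (auto simp: I_def dev_def)
    qed simp
  qed
  have I: "finite I"
    by (simp add: I_def F(1))
  have dev_UN: "(\<Union>i\<in>I. dev i n) \<in> sets M" for n
    using I dev by (rule sets.finite_UN)
  have bound: "measure M {w \<in> space M. \<theta>h n w \<in> A} \<le> (\<Sum>i\<in>I. measure M (dev i n))" for n
  proof -
    have "measure M {w \<in> space M. \<theta>h n w \<in> A} \<le> measure M (N \<union> (\<Union>i\<in>I. dev i n))"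
      by (rule M.finite_measure_mono[OF cover sets.Un[OF N(3) dev_UN]])
    also have "\<dots> \<le> measure M N + measure M (\<Union>i\<in>I. dev i n)"
      by (rule measure_Un_le[OF N(3) dev_UN])
    also have "measure M (\<Union>i\<in>I. dev i n) \<le> (\<Sum>i\<in>I. measure M (dev i n))"
      using dev by (intro M.finite_measure_subadditive_finite[OF I]) blast
    finally show ?thesis
      using N(2) by (simp add: measure_def)
  qed
  have lim: "(\<lambda>n. \<Sum>i\<in>I. measure M (dev i n)) \<longlonglongrightarrow> 0"
  proof (rule tendsto_null_sum)
    fix i assume "i \<in> I"
    have "0 < d / 2"
      using F(4) by simp
    then show "(\<lambda>n. measure M (dev i n)) \<longlonglongrightarrow> 0"
      unfolding dev_def by (rule window_average_tendsto_in_prob[OF M X g[OF \<open>i \<in> I\<close>]])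
  qed
  show ?thesis
  proof (rule tendsto_sandwich[OF always_eventually always_eventually tendsto_const lim])
    show "\<forall>n. 0 \<le> measure M {w \<in> space M. \<theta>h n w \<in> A}"
      by simp
    show "\<forall>n. measure M {w \<in> space M. \<theta>h n w \<in> A} \<le> (\<Sum>i\<in>I. measure M (dev i n))"
      using bound by blast
  qed
qed

end

section \<open>Measurability and continuity of the quasi-log-likelihood\<close>

lemma isCont_if_eq_on_open:
  assumes "open U" "x \<in> U" "continuous_on U g" "\<And>z. z \<in> U \<Longrightarrow> f z = g z"
  shows "isCont f x"
proof -
  have "continuous_on U f"
    using assms(3) by (rule continuous_on_eq) (use assms(4) in simp)
  then show ?thesis
    using assms(1,2) continuous_on_eq_continuous_at by blast
qed

lemma set_integrable_Ioo_iff_Icc: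
  fixes f :: "real \<Rightarrow> real"
  shows "set_integrable lborel {a<..<b} f \<longleftrightarrow> set_integrable lborel {a..b} f"
  by (rule set_integrable_discrete_difference[where X="{a, b}"]) auto

lemma interval_integrable_iff_Icc:
  fixes f :: "real \<Rightarrow> real"
  shows "interval_lebesgue_integrable lborel (ereal a) (ereal b) f
    \<longleftrightarrow> set_integrable lborel {min a b..max a b} f"
  unfolding interval_lebesgue_integrable_def by (simp add: set_integrable_Ioo_iff_Icc min_def max_def)

lemma interval_integral_not_integrable:
  fixes f :: "real \<Rightarrow> real"
  assumes "\<not> set_integrable lborel {min a b..max a b} f"
  shows "(LBINT x=ereal a..ereal b. f x) = 0"
proof (cases "a \<le> b")
  case True
  then have "\<not> set_integrable lborel {a<..<b} f"
    using assms by (simp add: set_integrable_Ioo_iff_Icc)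
  then show ?thesis
    using True unfolding interval_lebesgue_integral_def set_lebesgue_integral_def set_integrable_def
    by (simp add: not_integrable_integral_eq)
next
  case False
  then have "\<not> set_integrable lborel {b<..<a} f"
    using assms by (simp add: set_integrable_Ioo_iff_Icc)
  then show ?thesis
    using False unfolding interval_lebesgue_integral_def set_lebesgue_integral_def set_integrable_def
    by (simp add: not_integrable_integral_eq)
qed

lemma interval_integral_sum_Icc:
  fixes f :: "real \<Rightarrow> real"
  assumes f: "set_integrable lborel {lo..hi} f" and "a \<in> {lo..hi}" "b \<in> {lo..hi}" "c \<in> {lo..hi}"
  shows "(LBINT x=ereal a..ereal b. f x) + (LBINT x=ereal b..ereal c. f x) = (LBINT x=ereal a..ereal c. f x)"
proof (rule interval_integral_sum)
  have "set_integrable lborel {min a (min b c)..max a (max b c)} f"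
    by (rule set_integrable_subset[OF f]) (use assms(2-4) in auto)
  then show "interval_lebesgue_integrable lborel (min (ereal a) (min (ereal b) (ereal c)))
      (max (ereal a) (max (ereal b) (ereal c))) f"
    using interval_integrable_iff_Icc[of "min a (min b c)" "max a (max b c)" f] by simp
qed

lemma continuous_on_interval_integral_upper:
  fixes f :: "real \<Rightarrow> real"
  assumes f: "set_integrable lborel {p..q} f"
  shows "continuous_on {p..q} (\<lambda>z. LBINT x=ereal p..ereal z. f x)"
proof (rule continuous_on_eq)
  show "continuous_on {p..q} (\<lambda>z. integral {p..z} f)"
    using set_borel_integral_eq_integral(1)[OF f] by (rule indefinite_integral_continuous_1)
  show "integral {p..z} f = (LBINT x=ereal p..ereal z. f x)" if "z \<in> {p..q}" for z
    using that set_integrable_subset[OF f, of "{p..z}"] by (simp add: interval_integral_eq_integral)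
qed

text \<open>For \<open>m \<in> [p, q]\<close>, integrability over the interval between \<open>y\<close> and \<open>m\<close> does not depend on \<open>m\<close>,
  which gives a single formula for the integral near \<open>m0\<close>.\<close>

lemma isCont_interval_integral_upper:
  fixes f :: "real \<Rightarrow> real"
  assumes f: "set_integrable lborel {p..q} f" and m0: "p < m0" "m0 < q"
  shows "isCont (\<lambda>m. LBINT x=ereal y..ereal m. f x) m0"
proof (rule isCont_if_eq_on_open[of "{p<..<q}"])
  define I where "I = set_integrable lborel {min y p..max y p} f"
  show "continuous_on {p<..<q}
      (\<lambda>m. if I then (LBINT x=ereal y..ereal p. f x) + (LBINT x=ereal p..ereal m. f x) else 0)"
  proof -
    have "continuous_on {p<..<q} (\<lambda>m. LBINT x=ereal p..ereal m. f x)"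
      by (rule continuous_on_subset[OF continuous_on_interval_integral_upper[OF f]]) auto
    then show ?thesis
      by (cases I) (auto intro: continuous_on_add continuous_on_const)
  qed
  fix m assume m: "m \<in> {p<..<q}"
  show "(LBINT x=ereal y..ereal m. f x)
      = (if I then (LBINT x=ereal y..ereal p. f x) + (LBINT x=ereal p..ereal m. f x) else 0)"
  proof (cases I)
    case True
    then have "set_integrable lborel ({min y p..max y p} \<union> {p..q}) f"
      using f unfolding I_def by (rule set_integrable_Un) auto
    moreover have "{min y p..max y p} \<union> {p..q} = {min y p..max y q}"
      using m0 by auto
    ultimately have "set_integrable lborel {min y p..max y q} f"
      by simp
    then have "(LBINT x=ereal y..ereal p. f x) + (LBINT x=ereal p..ereal m. f x) = (LBINT x=ereal y..ereal m. f x)"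
      by (rule interval_integral_sum_Icc) (use m m0 in auto)
    then show ?thesis
      using True by simp
  next
    case False
    have "\<not> set_integrable lborel {min y m..max y m} f"
    proof
      assume "set_integrable lborel {min y m..max y m} f"
      then have "set_integrable lborel ({min y m..max y m} \<union> {p..q}) f"
        using f by (rule set_integrable_Un) auto
      then have I
        unfolding I_def by (rule set_integrable_subset) (use m in auto)
      with False show False ..
    qed
    then show ?thesis
      using False by (simp add: interval_integral_not_integrable)
  qed
qed (use m0 in auto)

lemma set_integrable_mult_bounded:
  fixes g h :: "real \<Rightarrow> real"
  assumes h: "set_integrable lborel A h" and g: "g \<in> borel_measurable borel"
    and bound: "\<And>x. x \<in> A \<Longrightarrow> \<bar>g x\<bar> \<le> C"
  shows "set_integrable lborel A (\<lambda>x. g x * h x)"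
proof (rule set_integrable_bound[OF set_integrable_mult_right[OF h, of C]])
  have "(\<lambda>x. indicator A x *\<^sub>R h x) \<in> borel_measurable lborel"
    using h unfolding set_integrable_def by (rule borel_measurable_integrable)
  then have "(\<lambda>x. g x * (indicator A x *\<^sub>R h x)) \<in> borel_measurable lborel"
    using g by measurable
  then show "set_borel_measurable lborel A (\<lambda>x. g x * h x)"
    unfolding set_borel_measurable_def by (simp add: ac_simps)
  show "AE x in lborel. x \<in> A \<longrightarrow> norm (g x * h x) \<le> norm (C * h x)"
  proof (rule AE_I2, rule impI)
    fix x assume "x \<in> A"
    then have "\<bar>g x\<bar> \<le> \<bar>C\<bar>"
      using bound[of x] by linarith
    then show "norm (g x * h x) \<le> norm (C * h x)"
      by (simp add: abs_mult mult_right_mono)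
  qed
qed

text \<open>The integrand need not be integrable when \<open>y\<close> lies outside the set where \<open>h\<close> is continuous;
  the value is then \<open>0\<close>, and \<open>ql_integral h y m\<close> can jump in \<open>y\<close>.\<close>

definition ql_integral :: "(real \<Rightarrow> real) \<Rightarrow> real \<Rightarrow> real \<Rightarrow> real" where
  "ql_integral h y m = (LBINT w=ereal y..ereal m. (y - w) * h w)"

lemma quasi_loglik_eq_ql_integral:
  "quasi_loglik phi V y mu = (1 / phi) * ql_integral (\<lambda>w. inverse (V w)) y mu"
  unfolding quasi_loglik_def ql_integral_def by (simp add: divide_inverse)

lemma ql_integral_not_integrable:
  "\<not> set_integrable lborel {min y m..max y m} (\<lambda>w. (y - w) * h w) \<Longrightarrow> ql_integral h y m = 0"
  unfolding ql_integral_def by (rule interval_integral_not_integrable)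

lemma isCont_ql_integral_upper:
  fixes h :: "real \<Rightarrow> real"
  assumes "open D" "continuous_on D h" "m0 \<in> D"
  shows "isCont (ql_integral h y) m0"
proof -
  obtain e where e: "0 < e" "cball m0 e \<subseteq> D"
    using assms(1,3) open_contains_cball by blast
  then have "{m0 - e..m0 + e} \<subseteq> D"
    by (simp add: cball_eq_atLeastAtMost)
  then have "set_integrable lborel {m0 - e..m0 + e} (\<lambda>w. (y - w) * h w)"
    by (intro borel_integrable_atLeastAtMost' continuous_intros continuous_on_subset[OF assms(2)])
  then show ?thesis
    unfolding ql_integral_def[abs_def] by (rule isCont_interval_integral_upper) (use e in auto)
qed

lemma ql_integral_Icc:
  fixes h :: "real \<Rightarrow> real"
  assumes h: "set_integrable lborel {c..d} h" and y: "y \<in> {c..d}" and m: "m \<in> {c..d}"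
  shows "ql_integral h y m = y * ((LBINT w=ereal c..ereal m. h w) - (LBINT w=ereal c..ereal y. h w))
    - ((LBINT w=ereal c..ereal m. w * h w) - (LBINT w=ereal c..ereal y. w * h w))"
proof -
  have wh: "set_integrable lborel {c..d} (\<lambda>w. w * h w)"
    using h by (rule set_integrable_mult_bounded[where C="\<bar>c\<bar> + \<bar>d\<bar>"]) auto
  have c: "c \<in> {c..d}"
    using y by auto
  have sub: "{min y m..max y m} \<subseteq> {c..d}"
    using y m by auto
  have "set_integrable lborel {min y m..max y m} h" "set_integrable lborel {min y m..max y m} (\<lambda>w. w * h w)"
    using set_integrable_subset[OF h _ sub] set_integrable_subset[OF wh _ sub] by auto
  then have "ql_integral h y m = y * (LBINT w=ereal y..ereal m. h w) - (LBINT w=ereal y..ereal m. w * h w)"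
    unfolding ql_integral_def
    by (simp add: left_diff_distrib interval_integrable_iff_Icc interval_lebesgue_integral_diff)
  also have "(LBINT w=ereal y..ereal m. h w) = (LBINT w=ereal c..ereal m. h w) - (LBINT w=ereal c..ereal y. h w)"
    using interval_integral_sum_Icc[OF h c y m] by simp
  also have "(LBINT w=ereal y..ereal m. w * h w)
      = (LBINT w=ereal c..ereal m. w * h w) - (LBINT w=ereal c..ereal y. w * h w)"
    using interval_integral_sum_Icc[OF wh c y m] by simp
  finally show ?thesis .
qed

lemma isCont_ql_integral_lower_Icc:
  fixes h :: "real \<Rightarrow> real"
  assumes h: "set_integrable lborel {c..d} h" and y0: "c < y0" "y0 < d" and m: "m \<in> {c..d}"
  shows "isCont (\<lambda>y. ql_integral h y m) y0"
proof (rule isCont_if_eq_on_open[of "{c<..<d}"])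
  have wh: "set_integrable lborel {c..d} (\<lambda>w. w * h w)"
    using h by (rule set_integrable_mult_bounded[where C="\<bar>c\<bar> + \<bar>d\<bar>"]) auto
  have "continuous_on {c<..<d} (\<lambda>z. LBINT w=ereal c..ereal z. h w)"
    "continuous_on {c<..<d} (\<lambda>z. LBINT w=ereal c..ereal z. w * h w)"
    by (auto intro: continuous_on_subset[OF continuous_on_interval_integral_upper[OF h]]
        continuous_on_subset[OF continuous_on_interval_integral_upper[OF wh]])
  then show "continuous_on {c<..<d} (\<lambda>y. y * ((LBINT w=ereal c..ereal m. h w) - (LBINT w=ereal c..ereal y. h w))
      - ((LBINT w=ereal c..ereal m. w * h w) - (LBINT w=ereal c..ereal y. w * h w)))"
    by (intro continuous_intros)
  show "ql_integral h z m = z * ((LBINT w=ereal c..ereal m. h w) - (LBINT w=ereal c..ereal z. h w))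
      - ((LBINT w=ereal c..ereal m. w * h w) - (LBINT w=ereal c..ereal z. w * h w))" if "z \<in> {c<..<d}" for z
    using that by (intro ql_integral_Icc[OF h _ m]) auto
qed (use y0 in auto)

text \<open>The \<open>y < m\<close> with integrable integrand form an interval ending at \<open>m\<close>; left of it the function
  vanishes, inside it \<open>ql_integral_Icc\<close> applies, so only its lower end can be a discontinuity.\<close>

lemma isCont_ql_integral_below:
  fixes h :: "real \<Rightarrow> real"
  shows "\<exists>a. \<forall>y<m. y \<noteq> a \<longrightarrow> isCont (\<lambda>y. ql_integral h y m) y"
proof -
  define J where "J = {y. y < m \<and> set_integrable lborel {y..m} (\<lambda>w. (y - w) * h w)}"
  have "isCont (\<lambda>y. ql_integral h y m) y" if y: "y < m" "y \<noteq> Inf J" for y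
  proof (cases "\<exists>y0\<in>J. y0 < y")
    case True
    then obtain y0 where y0: "y0 \<in> J" "y0 < y"
      by blast
    define y1 where "y1 = (y0 + y) / 2"
    have y1: "y0 < y1" "y1 < y"
      using y0(2) by (simp_all add: y1_def)
    have "set_integrable lborel {y1..m} (\<lambda>w. (1 / (y0 - w)) * ((y0 - w) * h w))"
    proof (rule set_integrable_mult_bounded[where C="1 / (y1 - y0)"])
      show "set_integrable lborel {y1..m} (\<lambda>w. (y0 - w) * h w)"
        by (rule set_integrable_subset[of _ "{y0..m}"]) (use y0(1) y1 in \<open>auto simp: J_def\<close>)
      show "(\<lambda>w. 1 / (y0 - w)) \<in> borel_measurable borel"
        by measurable
      show "\<bar>1 / (y0 - w)\<bar> \<le> 1 / (y1 - y0)" if "w \<in> {y1..m}" for w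
        using that y1 by (simp add: abs_minus_commute frac_le)
    qed
    moreover have "set_integrable lborel {y1..m} (\<lambda>w. (1 / (y0 - w)) * ((y0 - w) * h w))
        \<longleftrightarrow> set_integrable lborel {y1..m} h"
      using y1 by (intro set_integrable_cong) auto
    ultimately have "set_integrable lborel {y1..m} h"
      by blast
    then show ?thesis
      by (rule isCont_ql_integral_lower_Icc) (use y1 y in auto)
  next
    case False
    then have lower: "y \<le> z" if "z \<in> J" for z
      using that by force
    define b where "b = (if J = {} then m else Inf J)"
    have "y < b"
    proof (cases "J = {}")
      case False
      then have "y \<le> Inf J"
        using lower by (intro cInf_greatest) auto
      then show ?thesis
        using False y(2) by (simp add: b_def)
    qed (simp add: b_def y)
    have "ql_integral h z m = 0" if "z < b" for z
    proof (rule ql_integral_not_integrable)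
      have "z < m \<and> z \<notin> J"
      proof (cases "J = {}")
        case False
        then obtain j where "j \<in> J"
          by blast
        moreover have "bdd_below J"
          using lower by (auto simp: bdd_below_def)
        ultimately have "Inf J \<le> j" "j < m" "\<And>z. z \<in> J \<Longrightarrow> Inf J \<le> z"
          by (auto simp: J_def intro: cInf_lower)
        then show ?thesis
          using that False by (force simp: b_def)
      qed (use that in \<open>simp add: b_def\<close>)
      then show "\<not> set_integrable lborel {min z m..max z m} (\<lambda>w. (z - w) * h w)"
        by (simp add: J_def)
    qed
    then show ?thesis
      by (intro isCont_if_eq_on_open[of "{..<b}" _ "\<lambda>_. 0"]) (use \<open>y < b\<close> in auto)
  qed
  then show ?thesis
    by blast
qed

lemma ql_integral_reflect: "ql_integral h y m = ql_integral (\<lambda>u. h (- u)) (- y) (- m)"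
proof -
  have "ql_integral h y m = (LBINT u=- ereal m..- ereal y. (y + u) * h (- u))"
    unfolding ql_integral_def by (subst interval_integral_reflect) simp
  also have "\<dots> = - (LBINT u=ereal (- y)..ereal (- m). (y + u) * h (- u))"
    by (subst interval_integral_endpoints_reverse) simp
  also have "\<dots> = (LBINT u=ereal (- y)..ereal (- m). - ((y + u) * h (- u)))"
    by (simp add: interval_lebesgue_integral_uminus)
  also have "\<dots> = ql_integral (\<lambda>u. h (- u)) (- y) (- m)"
    unfolding ql_integral_def
    by (rule arg_cong[where f="interval_lebesgue_integral lborel (ereal (- y)) (ereal (- m))"])
      (auto simp: algebra_simps)
  finally show ?thesis .
qed

lemma isCont_ql_integral_above:
  fixes h :: "real \<Rightarrow> real"
  shows "\<exists>a. \<forall>y>m. y \<noteq> a \<longrightarrow> isCont (\<lambda>y. ql_integral h y m) y"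
proof -
  obtain a where a: "\<forall>y < - m. y \<noteq> a \<longrightarrow> isCont (\<lambda>y. ql_integral (\<lambda>u. h (- u)) y (- m)) y"
    using isCont_ql_integral_below by blast
  have "isCont (\<lambda>y. ql_integral h y m) y" if "m < y" "y \<noteq> - a" for y
  proof -
    have "isCont (\<lambda>y. ql_integral (\<lambda>u. h (- u)) y (- m)) (- y)"
      using a that by auto
    then have "isCont (\<lambda>y. ql_integral (\<lambda>u. h (- u)) (- y) (- m)) y"
      using isCont_o2[OF continuous_minus[OF continuous_ident]] by blast
    then show ?thesis
      by (subst ql_integral_reflect) simp
  qed
  then show ?thesis
    by blast
qed

lemma isCont_ql_integral_diagonal:
  fixes h :: "real \<Rightarrow> real"
  assumes "open D" "continuous_on D h" "m \<in> D"
  shows "isCont (\<lambda>y. ql_integral h y m) m"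
proof -
  obtain e where e: "0 < e" "cball m e \<subseteq> D"
    using assms(1,3) open_contains_cball by blast
  then have "{m - e..m + e} \<subseteq> D"
    by (simp add: cball_eq_atLeastAtMost)
  then have "set_integrable lborel {m - e..m + e} h"
    by (intro borel_integrable_atLeastAtMost' continuous_on_subset[OF assms(2)])
  then show ?thesis
    by (rule isCont_ql_integral_lower_Icc) (use e in auto)
qed

lemma borel_measurable_ql_integral_lower:
  fixes h :: "real \<Rightarrow> real"
  assumes "open D" "continuous_on D h" "m \<in> D"
  shows "(\<lambda>y. ql_integral h y m) \<in> borel_measurable borel"
proof -
  obtain a where a: "\<forall>y<m. y \<noteq> a \<longrightarrow> isCont (\<lambda>y. ql_integral h y m) y"
    using isCont_ql_integral_below by blast
  obtain b where b: "\<forall>y>m. y \<noteq> b \<longrightarrow> isCont (\<lambda>y. ql_integral h y m) y"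
    using isCont_ql_integral_above by blast
  have "continuous_on (- {a, b}) (\<lambda>y. ql_integral h y m)"
  proof (rule continuous_at_imp_continuous_on, rule ballI)
    fix y assume "y \<in> - {a, b}"
    then show "isCont (\<lambda>y. ql_integral h y m) y"
      using a b isCont_ql_integral_diagonal[OF assms] by (cases y m rule: linorder_cases) auto
  qed
  then show ?thesis
    by (intro borel_measurable_continuous_countable_exceptions[of "{a, b}"]) auto
qed

lemma tendsto_floor_grid: "(\<lambda>k. \<lfloor>real (Suc k) * z\<rfloor> / real (Suc k)) \<longlonglongrightarrow> z"
proof -
  have "\<bar>\<lfloor>real (Suc k) * z\<rfloor> / real (Suc k) - z\<bar> \<le> 1 / real (Suc k)" for k
  proof -
    define n where "n = real (Suc k)"
    have n: "0 < n"
      by (simp add: n_def)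
    have "\<bar>\<lfloor>n * z\<rfloor> - n * z\<bar> \<le> 1"
      by linarith
    moreover have "\<bar>\<lfloor>n * z\<rfloor> / n - z\<bar> = \<bar>\<lfloor>n * z\<rfloor> - n * z\<bar> / n"
      using n by (simp add: field_simps)
    ultimately show ?thesis
      using n unfolding n_def[symmetric] by (simp add: divide_right_mono)
  qed
  then have "(\<lambda>k. \<lfloor>real (Suc k) * z\<rfloor> / real (Suc k) - z) \<longlonglongrightarrow> 0"
    by (intro Lim_null_comparison[OF always_eventually LIMSEQ_Suc[OF lim_const_over_n[of 1]]]) simp
  then show ?thesis
    by (simp add: LIM_zero_iff)
qed

lemma borel_measurable_caratheodory:
  fixes F :: "real \<Rightarrow> real \<Rightarrow> real" and N :: "'c measure"
  assumes D: "open D" and F_fst: "\<And>m. m \<in> D \<Longrightarrow> (\<lambda>y. F y m) \<in> borel_measurable borel"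
    and F_snd: "\<And>y m. m \<in> D \<Longrightarrow> isCont (F y) m"
    and Y: "Y \<in> borel_measurable N" and Mu: "Mu \<in> borel_measurable N"
    and Mu_D: "\<And>x. x \<in> space N \<Longrightarrow> Mu x \<in> D"
  shows "(\<lambda>x. F (Y x) (Mu x)) \<in> borel_measurable N"
proof (rule borel_measurable_LIMSEQ_real)
  define grid where "grid k x = \<lfloor>real (Suc k) * Mu x\<rfloor> / real (Suc k)" for k x
  define F' where "F' y z = (if z \<in> D then F y z else 0)" for y z
  show "(\<lambda>x. F' (Y x) (grid k x)) \<in> borel_measurable N" for k
  proof -
    have "(\<lambda>x. (\<lambda>i::int. F' (Y x) (i / real (Suc k))) \<lfloor>real (Suc k) * Mu x\<rfloor>) \<in> borel_measurable N"
    proof (rule measurable_compose_countable[where f="\<lambda>i x. F' (Y x) (i / real (Suc k))"])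
      show "(\<lambda>x. F' (Y x) (i / real (Suc k))) \<in> borel_measurable N" for i :: int
        using measurable_compose[OF Y F_fst[of "i / real (Suc k)"]] by (cases "i / real (Suc k) \<in> D") (simp_all add: F'_def)
      show "(\<lambda>x. \<lfloor>real (Suc k) * Mu x\<rfloor>) \<in> measurable N (count_space UNIV)"
        using Mu by measurable
    qed
    then show ?thesis
      by (simp add: grid_def)
  qed
  fix x assume x: "x \<in> space N"
  have lim: "(\<lambda>k. grid k x) \<longlonglongrightarrow> Mu x"
    unfolding grid_def by (rule tendsto_floor_grid)
  have "(\<lambda>k. F (Y x) (grid k x)) \<longlonglongrightarrow> F (Y x) (Mu x)"
    by (rule isCont_tendsto_compose[OF F_snd[OF Mu_D[OF x]] lim])
  moreover have "\<forall>\<^sub>F k in sequentially. F (Y x) (grid k x) = F' (Y x) (grid k x)"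
    using topological_tendstoD[OF lim D Mu_D[OF x]] by eventually_elim (simp add: F'_def)
  ultimately show "(\<lambda>k. F' (Y x) (grid k x)) \<longlonglongrightarrow> F (Y x) (Mu x)"
    by (rule Lim_transform_eventually)
qed

lemma isCont_quasi_loglik:
  assumes "open D" "continuous_on D V" "\<forall>x\<in>D. 0 < V x" "m \<in> D"
  shows "isCont (quasi_loglik phi V y) m"
proof -
  have "continuous_on D (\<lambda>w. inverse (V w))"
    using assms(2,3) by (intro continuous_on_inverse) auto
  then have "isCont (ql_integral (\<lambda>w. inverse (V w)) y) m"
    by (rule isCont_ql_integral_upper[OF assms(1) _ assms(4)])
  then show ?thesis
    unfolding quasi_loglik_eq_ql_integral[abs_def] by (intro continuous_intros)
qed

lemma borel_measurable_quasi_loglik: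
  fixes N :: "'c measure"
  assumes D: "open D" "continuous_on D V" "\<forall>x\<in>D. 0 < V x"
    and Y: "Y \<in> borel_measurable N" and Mu: "Mu \<in> borel_measurable N"
    and Mu_D: "\<And>x. x \<in> space N \<Longrightarrow> Mu x \<in> D"
  shows "(\<lambda>x. quasi_loglik phi V (Y x) (Mu x)) \<in> borel_measurable N"
proof (rule borel_measurable_caratheodory[OF D(1) _ _ Y Mu Mu_D])
  fix m assume m: "m \<in> D"
  have "continuous_on D (\<lambda>w. inverse (V w))"
    using D(2,3) by (intro continuous_on_inverse) auto
  then have "(\<lambda>y. ql_integral (\<lambda>w. inverse (V w)) y m) \<in> borel_measurable borel"
    by (rule borel_measurable_ql_integral_lower[OF D(1) _ m])
  then show "(\<lambda>y. quasi_loglik phi V y m) \<in> borel_measurable borel"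
    unfolding quasi_loglik_eq_ql_integral by measurable
  show "isCont (quasi_loglik phi V y) m" for y
    by (rule isCont_quasi_loglik[OF D m])
qed

section \<open>The MixTSQL model\<close>

lemma space_path_space [simp]: "space path_space = UNIV"
  by (simp add: path_space_def space_PiM PiE_def extensional_def)

lemma measurable_joint_path:
  assumes "\<And>t. Y1 t \<in> borel_measurable M" "\<And>t. Y2 t \<in> borel_measurable M"
  shows "joint_path Y1 Y2 \<in> measurable M path_space"
  unfolding path_space_def joint_path_def
proof (rule measurable_PiM_single'[where f="\<lambda>t w. (Y1 t w, Y2 t w)"])
  show "(\<lambda>w. (Y1 t w, Y2 t w)) \<in> borel_measurable M" for t
    using assms by measurable
qed auto

lemma measurable_time_shift: "time_shift \<in> measurable path_space path_space"
  unfolding path_space_def time_shift_def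
proof (rule measurable_PiM_single'[where f="\<lambda>t x. x (t + 1)"])
  show "(\<lambda>x. x (t + 1)) \<in> measurable (PiM UNIV (\<lambda>_. borel)) borel" for t :: int
    by (rule measurable_component_singleton) simp
qed (auto simp: space_PiM)

lemma funpow_time_shift: "(time_shift ^^ n) x = (\<lambda>s. x (s + int n))"
  by (induction n) (simp_all add: time_shift_def ac_simps)

lemma ergodic_path_law:
  assumes M: "prob_space M" and Y: "\<And>t. Y1 t \<in> borel_measurable M" "\<And>t. Y2 t \<in> borel_measurable M"
    and stationary: "stationary_proc M Y1 Y2" and erg: "ergodic_proc M Y1 Y2"
  shows "ergodic (path_law M Y1 Y2) time_shift"
proof -
  let ?P = "path_law M Y1 Y2"
  have sets_P: "sets ?P = sets path_space" and space_P: "space ?P = UNIV"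
    by (simp_all add: path_law_def)
  show ?thesis
  proof (intro ergodic.intro mpt.intro mpt_axioms.intro ergodic_axioms.intro)
    show "prob_space ?P"
      unfolding path_law_def by (rule prob_space.prob_space_distr[OF M measurable_joint_path[OF Y]])
    show "time_shift \<in> measurable ?P ?P"
      using measurable_time_shift by (simp add: measurable_cong_sets[OF sets_P sets_P])
    have "distr ?P ?P time_shift = distr ?P path_space time_shift"
      by (rule distr_cong) (simp_all add: sets_P)
    then show "distr ?P ?P time_shift = ?P"
      using stationary by (simp add: stationary_proc_def)
    show "measure ?P A = 0 \<or> measure ?P A = 1" if "A \<in> sets ?P" "time_shift -` A \<inter> space ?P = A" for A
      using erg that by (simp add: ergodic_proc_def sets_P space_P)
  qed
qed

definition path_fst :: "int \<Rightarrow> (int \<Rightarrow> real \<times> real) \<Rightarrow> real" where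
  "path_fst u x = fst (x u)"

definition path_snd :: "int \<Rightarrow> (int \<Rightarrow> real \<times> real) \<Rightarrow> real" where
  "path_snd u x = snd (x u)"

lemma measurable_path_component: "(\<lambda>x. x u) \<in> measurable path_space (borel :: (real \<times> real) measure)"
  unfolding path_space_def by (rule measurable_component_singleton) simp

lemma borel_measurable_path_fst [measurable]: "path_fst u \<in> borel_measurable path_space"
proof -
  have "(fst :: real \<times> real \<Rightarrow> real) \<in> borel_measurable borel"
    by (intro borel_measurable_continuous_onI continuous_intros)
  then show ?thesis
    unfolding path_fst_def using measurable_compose[OF measurable_path_component] by blast
qed

lemma borel_measurable_path_snd [measurable]: "path_snd u \<in> borel_measurable path_space"
proof -
  have "(snd :: real \<times> real \<Rightarrow> real) \<in> borel_measurable borel"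
    by (intro borel_measurable_continuous_onI continuous_intros)
  then show ?thesis
    unfolding path_snd_def using measurable_compose[OF measurable_path_component] by blast
qed

lemma mix_mean_shift:
  assumes "\<And>u. Za u x = Ya (u + t) w" "\<And>u. Zb u x = Yb (u + t) w"
  shows "mix_mean g D a b Ta Tb Ya Yb \<theta> t w = mix_mean g D a b Ta Tb Za Zb \<theta> 0 x"
  using assms by (simp add: mix_mean_def lin_pred_def algebra_simps)

lemma borel_measurable_lin_pred [measurable]:
  assumes [measurable]: "Ta \<in> borel_measurable borel" "Tb \<in> borel_measurable borel"
    "\<And>s. Ya s \<in> borel_measurable N" "\<And>s. Yb s \<in> borel_measurable N"
  shows "lin_pred a b Ta Tb Ya Yb \<theta> t \<in> borel_measurable N"
  unfolding lin_pred_def by measurable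

lemma continuous_on_lin_pred: "continuous_on UNIV (\<lambda>\<theta>. lin_pred a b Ta Tb Ya Yb \<theta> t w)"
  unfolding lin_pred_def by (intro continuous_intros continuous_on_product_coordinates)

lemma continuous_on_coord_dist: "continuous_on UNIV (\<lambda>x. coord_dist d x y)"
  unfolding coord_dist_def by (intro continuous_intros continuous_on_product_coordinates)

locale mean_link =
  fixes g :: "real \<Rightarrow> real" and D :: "real set" and V :: "real \<Rightarrow> real"
  assumes open_domain: "open D" and bij_link: "bij_betw g D UNIV" and continuous_link: "continuous_on D g"
    and continuous_variance: "continuous_on D V" and variance_pos: "\<forall>\<mu>\<in>D. 0 < V \<mu>"
begin

lemma mix_mean_in_domain: "mix_mean g D a b Ta Tb Ya Yb \<theta> t w \<in> D"
  unfolding mix_mean_def using bij_betw_imp_surj_on[OF bij_link] by (intro inv_into_into) simp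

lemma continuous_inverse_link: "continuous_on UNIV (inv_into D g)"
proof -
  have "continuous_on (g ` D) (inv_into D g)"
    using bij_betw_imp_inj_on[OF bij_link]
    by (intro continuous_on_inverse_open[OF open_domain continuous_link]) auto
  then show ?thesis
    using bij_betw_imp_surj_on[OF bij_link] by simp
qed

lemma continuous_on_mix_mean: "continuous_on UNIV (\<lambda>\<theta>. mix_mean g D a b Ta Tb Ya Yb \<theta> t w)"
  unfolding mix_mean_def
  by (rule continuous_on_compose2[OF continuous_inverse_link continuous_on_lin_pred]) simp

lemma borel_measurable_mix_mean:
  assumes "Ta \<in> borel_measurable borel" "Tb \<in> borel_measurable borel"
    "\<And>s. Ya s \<in> borel_measurable N" "\<And>s. Yb s \<in> borel_measurable N"
  shows "mix_mean g D a b Ta Tb Ya Yb \<theta> t \<in> borel_measurable N"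
  unfolding mix_mean_def
  by (rule measurable_compose[OF borel_measurable_lin_pred[OF assms]
        borel_measurable_continuous_onI[OF continuous_inverse_link]])

lemma borel_measurable_mix_qll:
  assumes "Ta \<in> borel_measurable borel" "Tb \<in> borel_measurable borel"
    "\<And>s. Ya s \<in> borel_measurable N" "\<And>s. Yb s \<in> borel_measurable N"
  shows "(\<lambda>w. quasi_loglik phi V (Ya t w) (mix_mean g D a b Ta Tb Ya Yb \<theta> t w)) \<in> borel_measurable N"
  by (rule borel_measurable_quasi_loglik[OF open_domain continuous_variance variance_pos assms(3)
        borel_measurable_mix_mean[OF assms] mix_mean_in_domain])

lemma continuous_on_mix_qll:
  "continuous_on UNIV (\<lambda>\<theta>. quasi_loglik phi V y (mix_mean g D a b Ta Tb Ya Yb \<theta> t w))"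
proof (rule continuous_on_compose2[OF _ continuous_on_mix_mean])
  show "continuous_on D (quasi_loglik phi V y)"
    using isCont_quasi_loglik[OF open_domain continuous_variance variance_pos]
    by (intro continuous_at_imp_continuous_on) blast
qed (use mix_mean_in_domain[of a b Ta Tb Ya Yb _ t w] in blast)

end

lemma not_in_closure_superlevel:
  fixes f :: "'a::topological_space \<Rightarrow> real"
  assumes "continuous_on UNIV f" "f x0 < e"
  shows "x0 \<notin> closure {x. e < f x}"
proof -
  have "closure {x. e < f x} \<subseteq> {x. e \<le> f x}"
    by (rule closure_minimal) (auto intro: closed_Collect_le[OF continuous_on_const assms(1)])
  then show ?thesis
    using assms(2) by auto
qed

locale mixtsql = L1: mean_link g1 D1 V1 + L2: mean_link g2 D2 V2
  for g1 D1 V1 g2 D2 V2 +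
  fixes phi1 phi2 :: real and r s p k :: nat and T1 T2 :: "real \<Rightarrow> real"
  assumes measurable_transforms: "T1 \<in> borel_measurable borel" "T2 \<in> borel_measurable borel"
begin

definition pair_qll :: "(int \<Rightarrow> 'a \<Rightarrow> real) \<Rightarrow> (int \<Rightarrow> 'a \<Rightarrow> real) \<Rightarrow> (nat \<Rightarrow> real) \<times> (nat \<Rightarrow> real) \<Rightarrow> int \<Rightarrow> 'a \<Rightarrow> real"
  where "pair_qll Y1 Y2 \<theta> t w =
    quasi_loglik phi1 V1 (Y1 t w) (mix_mean g1 D1 r s T1 T2 Y1 Y2 (fst \<theta>) t w)
    + quasi_loglik phi2 V2 (Y2 t w) (mix_mean g2 D2 p k T2 T1 Y2 Y1 (snd \<theta>) t w)"

definition path_qll :: "(nat \<Rightarrow> real) \<times> (nat \<Rightarrow> real) \<Rightarrow> (int \<Rightarrow> real \<times> real) \<Rightarrow> real" where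
  "path_qll \<theta> x = pair_qll path_fst path_snd \<theta> 0 x"

lemma pair_qll_shift: "pair_qll Y1 Y2 \<theta> (int n) w = path_qll \<theta> ((time_shift ^^ n) (joint_path Y1 Y2 w))"
proof -
  define x where "x = (time_shift ^^ n) (joint_path Y1 Y2 w)"
  have path: "path_fst u x = Y1 (u + int n) w" "path_snd u x = Y2 (u + int n) w" for u
    by (simp_all add: x_def funpow_time_shift joint_path_def path_fst_def path_snd_def)
  have "mix_mean g1 D1 r s T1 T2 Y1 Y2 (fst \<theta>) (int n) w = mix_mean g1 D1 r s T1 T2 path_fst path_snd (fst \<theta>) 0 x"
    "mix_mean g2 D2 p k T2 T1 Y2 Y1 (snd \<theta>) (int n) w = mix_mean g2 D2 p k T2 T1 path_snd path_fst (snd \<theta>) 0 x"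
    by (rule mix_mean_shift; simp add: path)+
  then show ?thesis
    by (simp add: path_qll_def pair_qll_def path flip: x_def)
qed

lemma borel_measurable_path_qll: "path_qll \<theta> \<in> borel_measurable path_space"
proof -
  have "(\<lambda>x. quasi_loglik phi1 V1 (path_fst 0 x) (mix_mean g1 D1 r s T1 T2 path_fst path_snd (fst \<theta>) 0 x))
      \<in> borel_measurable path_space"
    by (rule L1.borel_measurable_mix_qll[OF measurable_transforms]) simp_all
  moreover have "(\<lambda>x. quasi_loglik phi2 V2 (path_snd 0 x) (mix_mean g2 D2 p k T2 T1 path_snd path_fst (snd \<theta>) 0 x))
      \<in> borel_measurable path_space"
    by (rule L2.borel_measurable_mix_qll[OF measurable_transforms(2,1)]) simp_all
  ultimately show ?thesis
    unfolding path_qll_def[abs_def] pair_qll_def by (rule borel_measurable_add)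
qed

lemma continuous_on_pair_qll: "continuous_on UNIV (\<lambda>\<theta>. pair_qll Y1 Y2 \<theta> t w)"
proof -
  have "continuous_on UNIV (\<lambda>\<theta>. quasi_loglik phi1 V1 (Y1 t w) (mix_mean g1 D1 r s T1 T2 Y1 Y2 (fst \<theta>) t w))"
    by (rule continuous_on_compose2[OF L1.continuous_on_mix_qll continuous_on_fst[OF continuous_on_id]]) auto
  moreover have "continuous_on UNIV (\<lambda>\<theta>. quasi_loglik phi2 V2 (Y2 t w) (mix_mean g2 D2 p k T2 T1 Y2 Y1 (snd \<theta>) t w))"
    by (rule continuous_on_compose2[OF L2.continuous_on_mix_qll continuous_on_snd[OF continuous_on_id]]) auto
  ultimately show ?thesis
    unfolding pair_qll_def by (rule continuous_on_add)
qed

lemma ergodic_contrast_path_qll: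
  assumes M: "prob_space M" and Y: "\<And>t. Y1 t \<in> borel_measurable M" "\<And>t. Y2 t \<in> borel_measurable M"
    and stationary: "stationary_proc M Y1 Y2" and ergodic: "ergodic_proc M Y1 Y2"
    and \<Theta>: "compact \<Theta>"
    and envelope: "(\<integral>\<^sup>+ w. (SUP \<theta>\<in>\<Theta>. ennreal \<bar>pair_qll Y1 Y2 \<theta> 0 w\<bar>) \<partial>M) < \<infinity>"
  shows "ergodic_contrast (path_law M Y1 Y2) time_shift (\<lambda>\<theta> x. - path_qll \<theta> x) \<Theta>"
proof (rule ergodic_contrast.intro)
  show "ergodic (path_law M Y1 Y2) time_shift"
    by (rule ergodic_path_law[OF M Y stationary ergodic])
  have cont: "continuous_on \<Theta> (\<lambda>\<theta>. - path_qll \<theta> x)" for x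
    using continuous_on_subset[OF continuous_on_minus[OF continuous_on_pair_qll]] by (simp add: path_qll_def)
  have "(\<lambda>x. ennreal \<bar>- path_qll \<theta> x\<bar>) \<in> borel_measurable path_space" for \<theta>
    using borel_measurable_path_qll[of \<theta>] by measurable
  then have "(\<lambda>x. SUP \<theta>\<in>\<Theta>. ennreal \<bar>- path_qll \<theta> x\<bar>) \<in> borel_measurable path_space"
    by (rule borel_measurable_SUP_continuous[OF _ continuous_on_ennreal[OF continuous_on_rabs[OF cont]]])
  moreover have "pair_qll Y1 Y2 \<theta> 0 w = path_qll \<theta> (joint_path Y1 Y2 w)" for \<theta> w
    using pair_qll_shift[of Y1 Y2 \<theta> 0] by simp
  ultimately have "(\<integral>\<^sup>+ x. (SUP \<theta>\<in>\<Theta>. ennreal \<bar>- path_qll \<theta> x\<bar>) \<partial>path_law M Y1 Y2)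
      = (\<integral>\<^sup>+ w. (SUP \<theta>\<in>\<Theta>. ennreal \<bar>pair_qll Y1 Y2 \<theta> 0 w\<bar>) \<partial>M)"
    unfolding path_law_def by (simp add: nn_integral_distr[OF measurable_joint_path[OF Y]])
  then show "ergodic_contrast_axioms (path_law M Y1 Y2) (\<lambda>\<theta> x. - path_qll \<theta> x) \<Theta>"
    using \<Theta> borel_measurable_path_qll cont envelope by unfold_locales (simp_all add: path_law_def)
qed

theorem qmle_consistent:
  fixes M :: "'a measure" and Y1 Y2 :: "int \<Rightarrow> 'a \<Rightarrow> real"
    and \<Theta> :: "((nat \<Rightarrow> real) \<times> (nat \<Rightarrow> real)) set" and \<theta>h :: "nat \<Rightarrow> 'a \<Rightarrow> (nat \<Rightarrow> real) \<times> (nat \<Rightarrow> real)"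
  assumes M: "prob_space M" and Y: "\<And>t. Y1 t \<in> borel_measurable M" "\<And>t. Y2 t \<in> borel_measurable M"
    and stationary: "stationary_proc M Y1 Y2" and ergodic: "ergodic_proc M Y1 Y2"
    and \<Theta>: "compact \<Theta>" "\<theta>0 \<in> \<Theta>"
    and envelope: "(\<integral>\<^sup>+ w. (SUP \<theta>\<in>\<Theta>. ennreal \<bar>pair_qll Y1 Y2 \<theta> 0 w\<bar>) \<partial>M) < \<infinity>"
    and identifiable: "\<And>\<theta>. \<theta> \<in> \<Theta> \<Longrightarrow> \<theta> \<noteq> \<theta>0 \<Longrightarrow>
      (\<integral>w. - pair_qll Y1 Y2 \<theta>0 0 w \<partial>M) < (\<integral>w. - pair_qll Y1 Y2 \<theta> 0 w \<partial>M)"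
    and maximizer: "\<And>n w. w \<in> space M \<Longrightarrow> \<theta>h n w \<in> \<Theta> \<and> (\<forall>\<theta>\<in>\<Theta>.
      (\<Sum>t\<in>{m<..n}. pair_qll Y1 Y2 \<theta> (int t) w) \<le> (\<Sum>t\<in>{m<..n}. pair_qll Y1 Y2 (\<theta>h n w) (int t) w))"
  shows "\<forall>e>0. (\<lambda>n. measure M {w \<in> space M.
      sqrt ((coord_dist (r + s + 1) (fst (\<theta>h n w)) (fst \<theta>0))^2
        + (coord_dist (p + k + 1) (snd (\<theta>h n w)) (snd \<theta>0))^2) > e}) \<longlonglongrightarrow> 0"
proof (intro allI impI)
  fix e :: real assume e: "0 < e"
  define X where "X = joint_path Y1 Y2"
  define P where "P = path_law M Y1 Y2"
  interpret ergodic_contrast P time_shift "\<lambda>\<theta> x. - path_qll \<theta> x" \<Theta>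
    unfolding P_def by (rule ergodic_contrast_path_qll[OF M Y stationary ergodic \<Theta>(1) envelope])
  have sets_P: "sets P = sets path_space"
    by (simp add: P_def path_law_def)
  have X: "X \<in> measurable M P" "distr M P X = P"
    using measurable_joint_path[OF Y] unfolding X_def
    by (simp_all add: measurable_cong_sets[OF refl sets_P]) (simp add: P_def path_law_def cong: distr_cong)
  have shift: "pair_qll Y1 Y2 \<theta> (int n) w = path_qll \<theta> ((time_shift ^^ n) (X w))" for \<theta> n w
    by (simp add: X_def pair_qll_shift)
  define A where "A = {\<theta>. e < sqrt ((coord_dist (r + s + 1) (fst \<theta>) (fst \<theta>0))\<^sup>2
      + (coord_dist (p + k + 1) (snd \<theta>) (snd \<theta>0))\<^sup>2)}"
  have "(\<lambda>n. measure M {w \<in> space M. \<theta>h n w \<in> A}) \<longlonglongrightarrow> 0"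
  proof (rule minimum_contrast_consistent[OF M X \<Theta>(2)])
    have "pair_qll Y1 Y2 \<theta> 0 = (\<lambda>w. path_qll \<theta> (X w))" for \<theta>
      using shift[of \<theta> 0] by (simp add: fun_eq_iff)
    then show "(\<integral>x. - path_qll \<theta>0 x \<partial>P) < (\<integral>x. - path_qll \<theta> x \<partial>P)" if "\<theta> \<in> \<Theta>" "\<theta> \<noteq> \<theta>0" for \<theta>
      using identifiable[OF that] X(1)
      by (simp add: P_def path_law_def integral_distr measurable_joint_path[OF Y] borel_measurable_path_qll X_def)
    show "\<theta>h n w \<in> \<Theta> \<and> (\<forall>\<theta>\<in>\<Theta>. (\<Sum>t\<in>{m<..n}. - path_qll (\<theta>h n w) ((time_shift ^^ t) (X w)))
        \<le> (\<Sum>t\<in>{m<..n}. - path_qll \<theta> ((time_shift ^^ t) (X w))))" if "w \<in> space M" for n w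
      using maximizer[OF that] by (simp add: shift[symmetric] sum_negf)
    have "continuous_on UNIV (\<lambda>\<theta>. sqrt ((coord_dist (r + s + 1) (fst \<theta>) (fst \<theta>0))\<^sup>2
        + (coord_dist (p + k + 1) (snd \<theta>) (snd \<theta>0))\<^sup>2))"
      by (intro continuous_intros continuous_on_compose2[OF continuous_on_coord_dist] continuous_on_fst
          continuous_on_snd continuous_on_id) auto
    then show "\<theta>0 \<notin> closure A"
      unfolding A_def by (rule not_in_closure_superlevel) (simp add: coord_dist_def e)
  qed
  then show "(\<lambda>n. measure M {w \<in> space M.
      sqrt ((coord_dist (r + s + 1) (fst (\<theta>h n w)) (fst \<theta>0))^2
        + (coord_dist (p + k + 1) (snd (\<theta>h n w)) (snd \<theta>0))^2) > e}) \<longlonglongrightarrow> 0"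
    by (simp add: A_def)
qed

end

theorem theorem1:
  fixes M :: "'a measure"
    and Y1 Y2 :: "int \<Rightarrow> 'a \<Rightarrow> real"
    and p k r s :: nat
    and g1 g2 :: "real \<Rightarrow> real" and D1 D2 :: "real set"
    and T1 T2 :: "real \<Rightarrow> real"
    and V1 V2 :: "real \<Rightarrow> real" and phi1 phi2 :: real
    and Theta1 Theta2 :: "(nat \<Rightarrow> real) set"
    and theta0 :: "(nat \<Rightarrow> real) \<times> (nat \<Rightarrow> real)"
    and theta_hat :: "nat \<Rightarrow> 'a \<Rightarrow> (nat \<Rightarrow> real) \<times> (nat \<Rightarrow> real)"
    and mu1 mu2 Q1 Q2 :: "(nat \<Rightarrow> real) \<Rightarrow> int \<Rightarrow> 'a \<Rightarrow> real"
    and Qtilde :: "nat \<Rightarrow> (nat \<Rightarrow> real) \<times> (nat \<Rightarrow> real) \<Rightarrow> 'a \<Rightarrow> real"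
    and m :: nat
  defines "mu1 \<equiv> \<lambda>th t w. mix_mean g1 D1 r s T1 T2 Y1 Y2 th t w"
    and "mu2 \<equiv> \<lambda>th t w. mix_mean g2 D2 p k T2 T1 Y2 Y1 th t w"
    and "Q1 \<equiv> \<lambda>th t w. quasi_loglik phi1 V1 (Y1 t w) (mu1 th t w)"
    and "Q2 \<equiv> \<lambda>th t w. quasi_loglik phi2 V2 (Y2 t w) (mu2 th t w)"
    and "m \<equiv> max (max p k) (max r s)"
    and "Qtilde \<equiv> \<lambda>n th w. \<Sum>t\<in>{int m + 1..int n}. Q1 (fst th) t w + Q2 (snd th) t w"
  assumes prob: "prob_space M"
    and Y_meas: "\<And>t. Y1 t \<in> borel_measurable M" "\<And>t. Y2 t \<in> borel_measurable M"
    (* link functions: continuous, invertible (bijection from the open mean domain onto R), twice differentiable *)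
    and links: "open D1" "open D2" "bij_betw g1 D1 UNIV" "bij_betw g2 D2 UNIV"
      "continuous_on D1 g1" "continuous_on D2 g2"
      "g1 differentiable_on D1" "deriv g1 differentiable_on D1"
      "g2 differentiable_on D2" "deriv g2 differentiable_on D2"
    (* transformations and variance functions *)
    and T_meas: "T1 \<in> borel_measurable borel" "T2 \<in> borel_measurable borel"
    and V_var: "continuous_on D1 V1" "continuous_on D2 V2" "\<forall>x\<in>D1. V1 x > 0" "\<forall>x\<in>D2. V2 x > 0"
    and phi_pos: "phi1 > 0" "phi2 > 0"
    (* MixTSQL model with true parameter theta0 *)
    and cind: "\<And>t. cond_indep M (past_sigma M Y1 Y2 t) (Y1 t) (Y2 t)"
    and integr: "\<And>t. integrable M (Y1 t)" "\<And>t. integrable M (Y2 t)"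
      "\<And>t. integrable M (\<lambda>w. (Y1 t w)^2)" "\<And>t. integrable M (\<lambda>w. (Y2 t w)^2)"
    and cmean1: "\<And>t. AE w in M. real_cond_exp M (past_sigma M Y1 Y2 t) (Y1 t) w = mu1 (fst theta0) t w"
    and cmean2: "\<And>t. AE w in M. real_cond_exp M (past_sigma M Y1 Y2 t) (Y2 t) w = mu2 (snd theta0) t w"
    and cvar1: "\<And>t. AE w in M. real_cond_exp M (past_sigma M Y1 Y2 t)
                  (\<lambda>v. (Y1 t v - mu1 (fst theta0) t v)^2) w = phi1 * V1 (mu1 (fst theta0) t w)"
    and cvar2: "\<And>t. AE w in M. real_cond_exp M (past_sigma M Y1 Y2 t)
                  (\<lambda>v. (Y2 t v - mu2 (snd theta0) t v)^2) w = phi2 * V2 (mu2 (snd theta0) t w)"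
    (* (A2) *)
    and A2: "stationary_proc M Y1 Y2" "ergodic_proc M Y1 Y2"
    (* (B1) *)
    and B1: "Theta1 \<subseteq> coord_space (r + s + 1)" "Theta2 \<subseteq> coord_space (p + k + 1)"
      "compact (Theta1 \<times> Theta2)"
      "\<exists>U. openin (top_of_set (coord_space (r + s + 1) \<times> coord_space (p + k + 1))) U
            \<and> theta0 \<in> U \<and> U \<subseteq> Theta1 \<times> Theta2"
    (* (C1) *)
    and C1: "\<And>t. (\<integral>\<^sup>+ w. (SUP th\<in>Theta1 \<times> Theta2. ennreal \<bar>Q1 (fst th) t w + Q2 (snd th) t w\<bar>) \<partial>M) < \<infinity>"
    (* (C2) *)
    and C2: "\<And>t th. th \<in> Theta1 \<times> Theta2 \<Longrightarrow> th \<noteq> theta0 \<Longrightarrow>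
       (\<integral>w. - Q1 (fst theta0) t w - Q2 (snd theta0) t w \<partial>M) < (\<integral>w. - Q1 (fst th) t w - Q2 (snd th) t w \<partial>M)"
    (* QMLE: a measurable minimiser of -Qtilde over Theta *)
    and qmle_meas: "\<And>n i. (\<lambda>w. fst (theta_hat n w) i) \<in> borel_measurable M"
      "\<And>n i. (\<lambda>w. snd (theta_hat n w) i) \<in> borel_measurable M"
    and qmle: "\<And>n w. w \<in> space M \<Longrightarrow> theta_hat n w \<in> Theta1 \<times> Theta2 \<and>
       (\<forall>th\<in>Theta1 \<times> Theta2. - Qtilde n (theta_hat n w) w \<le> - Qtilde n th w)"
  shows "\<forall>e>0. (\<lambda>n. measure M {w \<in> space M.
            sqrt ((coord_dist (r + s + 1) (fst (theta_hat n w)) (fst theta0))^2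
                + (coord_dist (p + k + 1) (snd (theta_hat n w)) (snd theta0))^2) > e})
          \<longlonglongrightarrow> 0"
proof -
  interpret mixtsql g1 D1 V1 g2 D2 V2 phi1 phi2 r s p k T1 T2
    using links V_var T_meas by unfold_locales auto
  have pair: "Q1 (fst \<theta>) t w + Q2 (snd \<theta>) t w = pair_qll Y1 Y2 \<theta> t w" for \<theta> t w
    by (simp add: Q1_def Q2_def mu1_def mu2_def pair_qll_def)
  have Qtilde: "Qtilde n \<theta> w = (\<Sum>t\<in>{m<..n}. pair_qll Y1 Y2 \<theta> (int t) w)" for n \<theta> w
  proof -
    have "{int m + 1..int n} = int ` {m<..n}"
      by (simp add: image_int_atLeastAtMost flip: atLeastSucAtMost_greaterThanAtMost)
    then show ?thesis
      by (simp add: Qtilde_def pair sum.reindex)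
  qed
  have neg_pair: "- Q1 (fst \<theta>) 0 w - Q2 (snd \<theta>) 0 w = - pair_qll Y1 Y2 \<theta> 0 w" for \<theta> w
    by (simp flip: pair)
  show ?thesis
  proof (rule qmle_consistent[OF prob Y_meas A2 B1(3)])
    show "theta0 \<in> Theta1 \<times> Theta2"
      using B1(4) by blast
    show "(\<integral>\<^sup>+ w. (SUP \<theta>\<in>Theta1 \<times> Theta2. ennreal \<bar>pair_qll Y1 Y2 \<theta> 0 w\<bar>) \<partial>M) < \<infinity>"
      using C1[of 0] by (simp add: pair)
    show "(\<integral>w. - pair_qll Y1 Y2 theta0 0 w \<partial>M) < (\<integral>w. - pair_qll Y1 Y2 \<theta> 0 w \<partial>M)"
      if "\<theta> \<in> Theta1 \<times> Theta2" "\<theta> \<noteq> theta0" for \<theta>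
      using C2[OF that, of 0] by (simp only: neg_pair)
    show "theta_hat n w \<in> Theta1 \<times> Theta2 \<and> (\<forall>\<theta>\<in>Theta1 \<times> Theta2.
        (\<Sum>t\<in>{m<..n}. pair_qll Y1 Y2 \<theta> (int t) w) \<le> (\<Sum>t\<in>{m<..n}. pair_qll Y1 Y2 (theta_hat n w) (int t) w))"
      if "w \<in> space M" for n w
      using qmle[OF that] by (simp add: Qtilde)
  qed
qed

end
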